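(* Let $M$ be a Poisson manifold with a local star product $*$, and let $\omega:C^\infty_0(M)[[\lambda]]\to\mathbb C[[\lambda]]$ be a positive $\mathbb C[[\lambda]]$-linear functional. Let $f,g\in C^\infty_0(M)[[\lambda]]$ and $\alpha\in\mathbb C[[\lambda]]$. Then: (i) if $\operatorname{supp}f\cap\operatorname{supp}\omega=\emptyset$, then $f\in\mathcal J_\omega$, hence $\psi_f=0$; (ii) $\operatorname{supp}\psi_f\subseteq\operatorname{supp}f\cap\operatorname{supp}\omega$; (iii) $\operatorname{supp}(\psi_f+\psi_g)\subseteq\operatorname{supp}\psi_f\cup\operatorname{supp}\psi_g$ and $\operatorname{supp}(\alpha\psi_f)\subseteq\operatorname{supp}\psi_f$.
   Context: $C^\infty(M)$ denotes complex-valued smooth functions and $\lambda$ is a formal parameter. A (local) star product $*$ on $M$ is an associative $\mathbb C[[\lambda]]$-bilinear product on $C^\infty(M)[[\lambda]]$ with $f*g=\sum_{r\ge0}\lambda^rM_r(f,g)$ for $f,g\in C^\infty(M)$, where the $M_r$ are local (e.g. bidifferential) operators, $M_0(f,g)=fg$, $M_1(f,g)-M_1(g,f)=\mathrm i\{f,g\}$, $M_r$ vanishes on constants for $r\ge1$, and $\overline{f*g}=\bar g*\bar f$ (pointwise complex conjugation, $\bar\lambda=\lambda$). For $f=\sum_r\lambda^rf_r$, $\operatorname{supp}f$ is the closure of $\bigcup_r\operatorname{supp}f_r$; for open $O$, $C^\infty_0(O)[[\lambda]]$ is the set of formal series all of whose coefficients have compact support in $O$. $\mathbb R[[\lambda]]$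 is ordered by declaring $a>0$ iff its lowest-order nonzero coefficient is positive. A $\mathbb C[[\lambda]]$-linear functional $\omega$ on $C^\infty_0(M)[[\lambda]]$ is positive if $\omega(\bar f*f)\ge0$ for all $f$; $\operatorname{supp}\omega$ is the complement of the union of all open $O\subseteq M$ with $\omega|_{C^\infty_0(O)[[\lambda]]}=0$. The Gel'fand ideal is $\mathcal J_\omega=\{f\in C^\infty_0(M)[[\lambda]]:\omega(\bar f*f)=0\}$, the GNS pre-Hilbert space is $\mathfrak H_\omega=C^\infty_0(M)[[\lambda]]/\mathcal J_\omega$ with equivalence classes $\psi_f$ and Hermitian product $\langle\psi_f,\psi_g\rangle=\omega(\bar f*g)$. The support of a vector is $\operatorname{supp}\psi_f:=\operatorname{supp}\omega_f$, where $\omega_f(g)=\omega(\bar f*g*f)$ for $g\in C^\infty_0(M)[[\lambda]]$. *)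

theory Defs
  imports "HOL-Analysis.Analysis" "HOL-Computational_Algebra.Formal_Power_Series"
begin

fun Ck_on :: "nat \<Rightarrow> ('a::real_normed_vector \<Rightarrow> 'b::real_normed_vector) \<Rightarrow> 'a set \<Rightarrow> bool" where
  "Ck_on 0 f S = continuous_on S f"
| "Ck_on (Suc k) f S = (f differentiable_on S \<and>
      (\<forall>v. Ck_on k (\<lambda>x. frechet_derivative f (at x) v) S))"

definition smooth_on :: "('a::real_normed_vector \<Rightarrow> 'b::real_normed_vector) \<Rightarrow> 'a set \<Rightarrow> bool" where
  "smooth_on f S \<longleftrightarrow> (\<forall>k. Ck_on k f S)"

definition is_chart :: "('m::topological_space) set \<Rightarrow> ('m \<Rightarrow> real^'n) \<Rightarrow> bool" where
  "is_chart U \<phi> \<longleftrightarrow> open U \<and> open (\<phi> ` U) \<and> homeomorphism U (\<phi> ` U) \<phi> (inv_into U \<phi>)"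

definition smooth_atlas :: "(('m::topological_space) set \<times> ('m \<Rightarrow> real^'n)) set \<Rightarrow> bool" where
  "smooth_atlas A \<longleftrightarrow>
     (\<forall>(U,\<phi>)\<in>A. is_chart U \<phi>) \<and> (\<Union>(U,\<phi>)\<in>A. U) = UNIV \<and>
     (\<forall>(U,\<phi>)\<in>A. \<forall>(V,\<psi>)\<in>A. smooth_on (\<psi> \<circ> inv_into U \<phi>) (\<phi> ` (U \<inter> V)))"

definition smooth_fun :: "('m set \<times> ('m \<Rightarrow> real^'n)) set \<Rightarrow> ('m \<Rightarrow> complex) \<Rightarrow> bool" where
  "smooth_fun A f \<longleftrightarrow> (\<forall>(U,\<phi>)\<in>A. smooth_on (f \<circ> inv_into U \<phi>) (\<phi> ` U))"

definition tsupp :: "('m::topological_space \<Rightarrow> complex) \<Rightarrow> 'm set" where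
  "tsupp f = closure {x. f x \<noteq> 0}"

text \<open>A Poisson bracket on C^infinity(M) (complex-bilinear extension of a real Poisson bracket).\<close>
definition poisson_bracket ::
  "('m::topological_space set \<times> ('m \<Rightarrow> real^'n)) set \<Rightarrow>
   (('m \<Rightarrow> complex) \<Rightarrow> ('m \<Rightarrow> complex) \<Rightarrow> ('m \<Rightarrow> complex)) \<Rightarrow> bool" where
  "poisson_bracket A pb \<longleftrightarrow>
    (\<forall>f g h c. smooth_fun A f \<longrightarrow> smooth_fun A g \<longrightarrow> smooth_fun A h \<longrightarrow>
       smooth_fun A (pb f g) \<and>
       pb (\<lambda>x. f x + g x) h = (\<lambda>x. pb f h x + pb g h x) \<and>
       pb (\<lambda>x. c * f x) g = (\<lambda>x. c * pb f g x) \<and>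
       pb f g = (\<lambda>x. - pb g f x) \<and>
       pb f (\<lambda>x. g x * h x) = (\<lambda>x. pb f g x * h x + g x * pb f h x) \<and>
       pb f (pb g h) = (\<lambda>x. pb (pb f g) h x + pb g (pb f h) x) \<and>
       (\<lambda>x. cnj (pb f g x)) = pb (\<lambda>x. cnj (f x)) (\<lambda>x. cnj (g x)))"

text \<open>An element of C^infinity(M)[[lambda]] is represented by its coefficient sequence.\<close>
type_synonym 'm fseries = "nat \<Rightarrow> 'm \<Rightarrow> complex"

definition smooth_series :: "('m set \<times> ('m \<Rightarrow> real^'n)) set \<Rightarrow> 'm fseries \<Rightarrow> bool" where
  "smooth_series A f \<longleftrightarrow> (\<forall>r. smooth_fun A (f r))"

definition star :: "(nat \<Rightarrow> ('m \<Rightarrow> complex) \<Rightarrow> ('m \<Rightarrow> complex) \<Rightarrow> ('m \<Rightarrow> complex)) \<Rightarrow>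
    'm fseries \<Rightarrow> 'm fseries \<Rightarrow> 'm fseries" where
  "star Mr f g = (\<lambda>r x. \<Sum>k\<le>r. \<Sum>i\<le>r - k. Mr k (f i) (g (r - k - i)) x)"

definition series_add :: "'m fseries \<Rightarrow> 'm fseries \<Rightarrow> 'm fseries" where
  "series_add f g = (\<lambda>r x. f r x + g r x)"

definition series_smult :: "complex fps \<Rightarrow> 'm fseries \<Rightarrow> 'm fseries" where
  "series_smult a f = (\<lambda>r x. \<Sum>i\<le>r. fps_nth a i * f (r - i) x)"

definition series_cnj :: "'m fseries \<Rightarrow> 'm fseries" where
  "series_cnj f = (\<lambda>r x. cnj (f r x))"

definition star_product ::
  "('m::topological_space set \<times> ('m \<Rightarrow> real^'n)) set \<Rightarrow>
   (('m \<Rightarrow> complex) \<Rightarrow> ('m \<Rightarrow> complex) \<Rightarrow> ('m \<Rightarrow> complex)) \<Rightarrow>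
   (nat \<Rightarrow> ('m \<Rightarrow> complex) \<Rightarrow> ('m \<Rightarrow> complex) \<Rightarrow> ('m \<Rightarrow> complex)) \<Rightarrow> bool" where
  "star_product A pb Mr \<longleftrightarrow>
    (\<forall>r f g h c. smooth_fun A f \<longrightarrow> smooth_fun A g \<longrightarrow> smooth_fun A h \<longrightarrow>
       smooth_fun A (Mr r f g) \<and>
       Mr r (\<lambda>x. f x + g x) h = (\<lambda>x. Mr r f h x + Mr r g h x) \<and>
       Mr r h (\<lambda>x. f x + g x) = (\<lambda>x. Mr r h f x + Mr r h g x) \<and>
       Mr r (\<lambda>x. c * f x) g = (\<lambda>x. c * Mr r f g x) \<and>
       Mr r g (\<lambda>x. c * f x) = (\<lambda>x. c * Mr r g f x) \<and>
       tsupp (Mr r f g) \<subseteq> tsupp f \<inter> tsupp g \<and>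
       (\<lambda>x. cnj (Mr r f g x)) = Mr r (\<lambda>x. cnj (g x)) (\<lambda>x. cnj (f x)) \<and>
       (r \<ge> 1 \<longrightarrow> Mr r (\<lambda>_. c) f = (\<lambda>_. 0) \<and> Mr r f (\<lambda>_. c) = (\<lambda>_. 0))) \<and>
    (\<forall>f g. smooth_fun A f \<longrightarrow> smooth_fun A g \<longrightarrow>
       Mr 0 f g = (\<lambda>x. f x * g x) \<and>
       (\<lambda>x. Mr 1 f g x - Mr 1 g f x) = (\<lambda>x. \<i> * pb f g x)) \<and>
    (\<forall>f g h. smooth_series A f \<longrightarrow> smooth_series A g \<longrightarrow> smooth_series A h \<longrightarrow>
       star Mr (star Mr f g) h = star Mr f (star Mr g h))"

definition C0 :: "('m::topological_space set \<times> ('m \<Rightarrow> real^'n)) set \<Rightarrow> 'm set \<Rightarrow> 'm fseries set" where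
  "C0 A S = {f. smooth_series A f \<and> (\<forall>r. compact (tsupp (f r)) \<and> tsupp (f r) \<subseteq> S)}"

definition ssupp :: "('m::topological_space) fseries \<Rightarrow> 'm set" where
  "ssupp f = closure (\<Union>r. tsupp (f r))"

definition fps_nonneg :: "complex fps \<Rightarrow> bool" where
  "fps_nonneg a \<longleftrightarrow> (\<forall>n. Im (fps_nth a n) = 0) \<and>
     (a = 0 \<or> Re (fps_nth a (subdegree a)) > 0)"

definition lin_functional ::
  "('m::topological_space set \<times> ('m \<Rightarrow> real^'n)) set \<Rightarrow> ('m fseries \<Rightarrow> complex fps) \<Rightarrow> bool" where
  "lin_functional A \<omega> \<longleftrightarrow>
     (\<forall>f\<in>C0 A UNIV. \<forall>g\<in>C0 A UNIV. \<omega> (series_add f g) = \<omega> f + \<omega> g) \<and>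
     (\<forall>a. \<forall>f\<in>C0 A UNIV. \<omega> (series_smult a f) = a * \<omega> f)"

definition positive_functional ::
  "('m::topological_space set \<times> ('m \<Rightarrow> real^'n)) set \<Rightarrow>
   (nat \<Rightarrow> ('m \<Rightarrow> complex) \<Rightarrow> ('m \<Rightarrow> complex) \<Rightarrow> ('m \<Rightarrow> complex)) \<Rightarrow>
   ('m fseries \<Rightarrow> complex fps) \<Rightarrow> bool" where
  "positive_functional A Mr \<omega> \<longleftrightarrow> lin_functional A \<omega> \<and>
     (\<forall>f\<in>C0 A UNIV. fps_nonneg (\<omega> (star Mr (series_cnj f) f)))"

definition func_supp ::
  "('m::topological_space set \<times> ('m \<Rightarrow> real^'n)) set \<Rightarrow> ('m fseries \<Rightarrow> complex fps) \<Rightarrow> 'm set" where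
  "func_supp A \<omega> = - \<Union>{S. open S \<and> (\<forall>f\<in>C0 A S. \<omega> f = 0)}"

definition gelfand_ideal ::
  "('m::topological_space set \<times> ('m \<Rightarrow> real^'n)) set \<Rightarrow>
   (nat \<Rightarrow> ('m \<Rightarrow> complex) \<Rightarrow> ('m \<Rightarrow> complex) \<Rightarrow> ('m \<Rightarrow> complex)) \<Rightarrow>
   ('m fseries \<Rightarrow> complex fps) \<Rightarrow> 'm fseries set" where
  "gelfand_ideal A Mr \<omega> = {f \<in> C0 A UNIV. \<omega> (star Mr (series_cnj f) f) = 0}"

text \<open>omega_f(g) = omega(conj f * g * f); the support of psi_f is the support of omega_f.\<close>
definition vec_functional ::
  "(nat \<Rightarrow> ('m \<Rightarrow> complex) \<Rightarrow> ('m \<Rightarrow> complex) \<Rightarrow> ('m \<Rightarrow> complex)) \<Rightarrow>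
   ('m fseries \<Rightarrow> complex fps) \<Rightarrow> 'm fseries \<Rightarrow> ('m fseries \<Rightarrow> complex fps)" where
  "vec_functional Mr \<omega> f = (\<lambda>g. \<omega> (star Mr (star Mr (series_cnj f) g) f))"

end

theory Submission
  imports Defs
begin

text \<open>
  Only locality, bilinearity, Hermiticity and associativity of the star product enter.

  First, a linear functional \<open>\<omega>\<close> vanishes on every series whose coefficients have compact
  support disjoint from \<open>supp \<omega>\<close>. This is the sheaf property of supports, obtained from a
  smooth partition of unity built out of bump functions \<open>exp (-1/t)\<close> in charts. It gives (i)
  and \<open>supp \<psi>\<^sub>f \<subseteq> supp \<omega>\<close>; the bound \<open>supp \<psi>\<^sub>f \<subseteq> supp f\<close> is locality of the star product.

  Second, positivity yields a formal Cauchy--Schwarz inequality: \<open>\<omega> (a\<^sup>* * a) = 0\<close> implies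
  \<open>\<omega> (a\<^sup>* * b) = 0\<close>. It kills the cross terms \<open>\<omega> (f\<^sup>* * h * g)\<close> in \<open>\<omega>\<^sub>f\<^sub>+\<^sub>g (h)\<close>, which
  gives the bound for \<open>\<psi>\<^sub>f + \<psi>\<^sub>g\<close>.
\<close>

section \<open>Higher differentiability on open sets\<close>

lemma Ck_on_Suc_imp_Ck_on: "Ck_on (Suc k) f S \<Longrightarrow> Ck_on k f S"
proof (induction k arbitrary: f)
  case 0
  then show ?case by (simp add: differentiable_imp_continuous_on)
next
  case (Suc k)
  then show ?case by auto
qed

lemma Ck_on_subset: "Ck_on k f S \<Longrightarrow> T \<subseteq> S \<Longrightarrow> Ck_on k f T"
proof (induction k arbitrary: f)
  case 0
  then show ?case by (auto intro: continuous_on_subset)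
next
  case (Suc k)
  then show ?case by (auto intro: differentiable_on_subset)
qed

lemma Ck_on_has_derivative:
  assumes "open S" "Ck_on (Suc k) f S" "x \<in> S"
  shows "(f has_derivative frechet_derivative f (at x)) (at x)"
proof -
  have "f differentiable (at x within S)" using assms by (auto simp: differentiable_on_def)
  then have "f differentiable (at x)" using assms at_within_open by metis
  then show ?thesis by (simp add: frechet_derivative_works)
qed

lemma Ck_on_cong:
  assumes "open S" "\<And>x. x \<in> S \<Longrightarrow> f x = g x" "Ck_on k f S"
  shows "Ck_on k g S"
  using assms
proof (induction k arbitrary: f g)
  case 0
  then show ?case using continuous_on_cong by force
next
  case (Suc k)
  have g': "(g has_derivative frechet_derivative f (at x)) (at x)" if "x \<in> S" for x
    using has_derivative_transform_within_open[OF Ck_on_has_derivative[OF Suc.prems(1,3) that]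
        Suc.prems(1) that] Suc.prems(2) by blast
  then have "frechet_derivative g (at x) = frechet_derivative f (at x)" if "x \<in> S" for x
    using that frechet_derivative_at by metis
  then have "Ck_on k (\<lambda>x. frechet_derivative g (at x) v) S" for v
    using Suc.IH[of "\<lambda>x. frechet_derivative f (at x) v"] Suc.prems by auto
  moreover have "g differentiable_on S"
    using g' by (meson differentiable_at_withinI differentiable_def differentiable_on_def)
  ultimately show ?case by simp
qed

lemma Ck_on_SucI:
  assumes "open S" "\<And>x. x \<in> S \<Longrightarrow> (f has_derivative f' x) (at x)"
    and "\<And>v. Ck_on k (\<lambda>x. f' x v) S"
  shows "Ck_on (Suc k) f S"
proof -
  have "frechet_derivative f (at x) = f' x" if "x \<in> S" for x
    using assms(2)[OF that] frechet_derivative_at by metis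
  then have "Ck_on k (\<lambda>x. frechet_derivative f (at x) v) S" for v
    using Ck_on_cong[OF assms(1) _ assms(3)[of v]] by auto
  moreover have "f differentiable_on S"
    using assms(2) by (meson differentiable_at_withinI differentiable_def differentiable_on_def)
  ultimately show ?thesis by simp
qed

lemma Ck_on_local:
  assumes "open S" "\<And>x. x \<in> S \<Longrightarrow> \<exists>N. open N \<and> x \<in> N \<and> Ck_on k f N"
  shows "Ck_on k f S"
  using assms
proof (induction k arbitrary: f)
  case 0
  have "continuous (at x) f" if "x \<in> S" for x
    using 0(2)[OF that] by (metis Ck_on.simps(1) continuous_on_eq_continuous_at)
  then show ?case by (simp add: continuous_at_imp_continuous_on)
next
  case (Suc k)
  have "f differentiable (at x)" if "x \<in> S" for x
    using Suc.prems(2)[OF that] by (metis Ck_on.simps(2) at_within_open differentiable_on_def)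
  then have "f differentiable_on S"
    by (simp add: differentiable_at_imp_differentiable_on)
  moreover have "Ck_on k (\<lambda>x. frechet_derivative f (at x) v) S" for v
    using Suc.prems(2) by (intro Suc.IH[OF Suc.prems(1)]) fastforce
  ultimately show ?case by simp
qed

lemma Ck_on_const: "Ck_on k (\<lambda>x. c) S"
proof (induction k arbitrary: c)
  case 0
  then show ?case by simp
next
  case (Suc k)
  have "frechet_derivative (\<lambda>x. c) (at x) = (\<lambda>v. 0)" for x
    using frechet_derivative_at[OF has_derivative_const] by metis
  then show ?case using Suc by simp
qed

lemma Ck_on_ident: "Ck_on k (\<lambda>x. x) S"
proof (cases k)
  case (Suc m)
  then show ?thesis
    by (auto intro: Ck_on_SucI[where f' = "\<lambda>x v. v"] Ck_on_subset[where S = UNIV] Ck_on_const)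
qed simp

lemma Ck_on_add:
  assumes "open S" "Ck_on k f S" "Ck_on k g S"
  shows "Ck_on k (\<lambda>x. f x + g x) S"
  using assms
proof (induction k arbitrary: f g)
  case 0
  then show ?case by (auto intro: continuous_on_add)
next
  case (Suc k)
  show ?case
  proof (rule Ck_on_SucI[OF Suc.prems(1)])
    fix x assume "x \<in> S"
    then show "((\<lambda>x. f x + g x) has_derivative
        (\<lambda>v. frechet_derivative f (at x) v + frechet_derivative g (at x) v)) (at x)"
      using Suc.prems by (intro has_derivative_add Ck_on_has_derivative)
  qed (use Suc in auto)
qed

lemma Ck_on_sum:
  assumes "open S" "finite I" "\<And>i. i \<in> I \<Longrightarrow> Ck_on k (F i) S"
  shows "Ck_on k (\<lambda>x. \<Sum>i\<in>I. F i x) S"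
  using assms(2,3)
  by (induction I rule: finite_induct) (simp_all add: Ck_on_const Ck_on_add[OF assms(1)])

lemma Ck_on_bounded_linear:
  assumes "bounded_linear L" "open S" "Ck_on k f S"
  shows "Ck_on k (\<lambda>x. L (f x)) S"
  using assms(2,3)
proof (induction k arbitrary: f)
  case 0
  then show ?case
    by (auto intro: continuous_on_compose2[OF linear_continuous_on[OF assms(1)]])
next
  case (Suc k)
  show ?case
  proof (rule Ck_on_SucI[OF Suc.prems(1)])
    fix x assume "x \<in> S"
    then show "((\<lambda>x. L (f x)) has_derivative (\<lambda>v. L (frechet_derivative f (at x) v))) (at x)"
      using Ck_on_has_derivative[OF Suc.prems] bounded_linear.has_derivative[OF assms(1)] by blast
  qed (use Suc in auto)
qed

lemma Ck_on_bounded_bilinear: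
  fixes prod :: "'b::real_normed_vector \<Rightarrow> 'c::real_normed_vector \<Rightarrow> 'd::real_normed_vector"
    and f :: "'a::real_normed_vector \<Rightarrow> 'b" and g :: "'a \<Rightarrow> 'c"
  assumes "bounded_bilinear prod" "open S" "Ck_on k f S" "Ck_on k g S"
  shows "Ck_on k (\<lambda>x. prod (f x) (g x)) S"
  using assms(2-)
proof (induction k arbitrary: f g)
  case 0
  then show ?case using bounded_bilinear.continuous_on[OF assms(1)] by auto
next
  case (Suc k)
  show ?case
  proof (rule Ck_on_SucI[OF Suc.prems(1)])
    fix x assume "x \<in> S"
    then show "((\<lambda>x. prod (f x) (g x)) has_derivative (\<lambda>v. prod (f x) (frechet_derivative g (at x) v)
        + prod (frechet_derivative f (at x) v) (g x))) (at x)"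
      using Ck_on_has_derivative[OF Suc.prems(1,2)] Ck_on_has_derivative[OF Suc.prems(1,3)]
        bounded_bilinear.FDERIV[OF assms(1)] by blast
  next
    fix v
    have f: "Ck_on k f S" "Ck_on k (\<lambda>x. frechet_derivative f (at x) v) S"
      using Suc.prems(2) Ck_on_Suc_imp_Ck_on by auto
    have g: "Ck_on k g S" "Ck_on k (\<lambda>x. frechet_derivative g (at x) v) S"
      using Suc.prems(3) Ck_on_Suc_imp_Ck_on by auto
    show "Ck_on k (\<lambda>x. prod (f x) (frechet_derivative g (at x) v)
        + prod (frechet_derivative f (at x) v) (g x)) S"
      by (rule Ck_on_add[OF Suc.prems(1) Suc.IH[OF Suc.prems(1) f(1) g(2)] Suc.IH[OF Suc.prems(1) f(2) g(1)]])
  qed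
qed

lemma linear_euclidean_expansion:
  fixes L :: "'a::euclidean_space \<Rightarrow> 'b::real_vector"
  assumes "linear L"
  shows "L x = (\<Sum>j\<in>Basis. (x \<bullet> j) *\<^sub>R L j)"
proof -
  interpret linear L by fact
  show ?thesis
    by (simp add: euclidean_representation sum[symmetric] scale[symmetric])
qed

text \<open>The chain rule only yields \<open>Db (G x) (DG x v)\<close>; expanding \<open>DG x v\<close> in the basis of the
  middle space turns this into a finite sum of products of \<open>C\<^sup>k\<close> functions.\<close>
lemma Ck_on_compose:
  fixes G :: "'a::real_normed_vector \<Rightarrow> 'b::euclidean_space" and b :: "'b \<Rightarrow> 'c::real_normed_vector"
  assumes S: "open S" and \<Omega>: "open \<Omega>" and G: "smooth_on G S" and GS: "G ` S \<subseteq> \<Omega>"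
  shows "smooth_on b \<Omega> \<Longrightarrow> Ck_on k (\<lambda>x. b (G x)) S"
proof (induction k arbitrary: b)
  case 0
  have "continuous_on \<Omega> b" "continuous_on S G"
    using 0 G unfolding smooth_on_def by (metis Ck_on.simps(1))+
  then show ?case using continuous_on_compose2[of \<Omega> b S G] GS by simp
next
  case (Suc k)
  let ?DG = "\<lambda>x. frechet_derivative G (at x)" and ?Db = "\<lambda>y. frechet_derivative b (at y)"
  have DG: "(G has_derivative ?DG x) (at x)" if "x \<in> S" for x
    using Ck_on_has_derivative[OF S _ that] G unfolding smooth_on_def by blast
  have Db: "(b has_derivative ?Db y) (at y)" if "y \<in> \<Omega>" for y
    using Ck_on_has_derivative[OF \<Omega> _ that] Suc.prems unfolding smooth_on_def by blast
  show ?case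
  proof (rule Ck_on_SucI[OF S, where f' = "\<lambda>x v. \<Sum>j\<in>Basis. (?DG x v \<bullet> j) *\<^sub>R ?Db (G x) j"])
    fix x assume x: "x \<in> S"
    then have "((\<lambda>x. b (G x)) has_derivative (\<lambda>v. ?Db (G x) (?DG x v))) (at x)"
      using diff_chain_at[OF DG Db] GS by (auto simp: o_def)
    moreover have "linear (?Db (G x))"
      using Db x GS has_derivative_linear by blast
    ultimately show "((\<lambda>x. b (G x)) has_derivative
        (\<lambda>v. \<Sum>j\<in>Basis. (?DG x v \<bullet> j) *\<^sub>R ?Db (G x) j)) (at x)"
      by (simp flip: linear_euclidean_expansion)
  next
    fix v
    show "Ck_on k (\<lambda>x. \<Sum>j\<in>Basis. (?DG x v \<bullet> j) *\<^sub>R ?Db (G x) j) S"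
    proof (rule Ck_on_sum[OF S finite_Basis])
      fix j :: 'b
      have "Ck_on k (\<lambda>x. ?DG x v \<bullet> j) S"
        using G unfolding smooth_on_def
        by (metis Ck_on_bounded_linear[OF bounded_linear_inner_left S] Ck_on.simps(2))
      moreover have "Ck_on k (\<lambda>x. ?Db (G x) j) S"
        using Suc.IH[of "\<lambda>y. ?Db y j"] Suc.prems unfolding smooth_on_def
        by (metis Ck_on.simps(2))
      ultimately show "Ck_on k (\<lambda>x. (?DG x v \<bullet> j) *\<^sub>R ?Db (G x) j) S"
        using Ck_on_bounded_bilinear[OF bounded_bilinear_scaleR S] by blast
    qed
  qed
qed

lemma smooth_on_compose:
  fixes G :: "'a::real_normed_vector \<Rightarrow> 'b::euclidean_space" and b :: "'b \<Rightarrow> 'c::real_normed_vector"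
  assumes "open S" "open \<Omega>" "smooth_on G S" "G ` S \<subseteq> \<Omega>" "smooth_on b \<Omega>"
  shows "smooth_on (\<lambda>x. b (G x)) S"
  using Ck_on_compose[OF assms] by (simp add: smooth_on_def)

lemma smooth_on_const: "smooth_on (\<lambda>x. c) S"
  by (simp add: smooth_on_def Ck_on_const)

lemma smooth_on_ident: "smooth_on (\<lambda>x. x) S"
  by (simp add: smooth_on_def Ck_on_ident)

lemma smooth_on_bounded_linear:
  "bounded_linear L \<Longrightarrow> open S \<Longrightarrow> smooth_on f S \<Longrightarrow> smooth_on (\<lambda>x. L (f x)) S"
  by (simp add: smooth_on_def Ck_on_bounded_linear)

lemma smooth_on_bounded_bilinear:
  fixes prod :: "'b::real_normed_vector \<Rightarrow> 'c::real_normed_vector \<Rightarrow> 'd::real_normed_vector"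
    and f :: "'a::real_normed_vector \<Rightarrow> 'b" and g :: "'a \<Rightarrow> 'c"
  shows "bounded_bilinear prod \<Longrightarrow> open S \<Longrightarrow> smooth_on f S \<Longrightarrow> smooth_on g S \<Longrightarrow>
    smooth_on (\<lambda>x. prod (f x) (g x)) S"
  by (simp add: smooth_on_def Ck_on_bounded_bilinear)

lemma smooth_on_add: "open S \<Longrightarrow> smooth_on f S \<Longrightarrow> smooth_on g S \<Longrightarrow> smooth_on (\<lambda>x. f x + g x) S"
  by (simp add: smooth_on_def Ck_on_add)

lemma smooth_on_diff: "open S \<Longrightarrow> smooth_on f S \<Longrightarrow> smooth_on g S \<Longrightarrow> smooth_on (\<lambda>x. f x - g x) S"
  using smooth_on_add[of S f "\<lambda>x. - g x"]
    smooth_on_bounded_linear[OF bounded_linear_minus[OF bounded_linear_ident], of S g]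
  by simp

lemma smooth_on_mult:
  fixes f g :: "'a::real_normed_vector \<Rightarrow> 'b::real_normed_algebra"
  shows "open S \<Longrightarrow> smooth_on f S \<Longrightarrow> smooth_on g S \<Longrightarrow> smooth_on (\<lambda>x. f x * g x) S"
  using smooth_on_bounded_bilinear[OF bounded_bilinear_mult] by blast

lemma smooth_on_cong: "open S \<Longrightarrow> (\<And>x. x \<in> S \<Longrightarrow> f x = g x) \<Longrightarrow> smooth_on f S \<Longrightarrow> smooth_on g S"
  unfolding smooth_on_def using Ck_on_cong by blast

lemma smooth_on_subset: "smooth_on f S \<Longrightarrow> T \<subseteq> S \<Longrightarrow> smooth_on f T"
  unfolding smooth_on_def using Ck_on_subset by blast

lemma smooth_on_local:
  assumes "open S" "\<And>x. x \<in> S \<Longrightarrow> \<exists>N. open N \<and> x \<in> N \<and> smooth_on f N"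
  shows "smooth_on f S"
  using assms Ck_on_local[OF assms(1)] unfolding smooth_on_def by meson

lemma inverse_power_has_field_derivative:
  fixes z c :: complex
  assumes "z \<noteq> 0"
  shows "((\<lambda>z. c * inverse z ^ m) has_field_derivative (- c * of_nat m * inverse z ^ Suc m)) (at z)"
  using assms
  apply (cases m)
   apply (auto intro!: derivative_eq_intros)[1]
  apply (auto intro!: derivative_eq_intros simp: field_simps power_Suc)
  apply (case_tac nat, auto)
  done

lemma Ck_on_inverse_power: "Ck_on k (\<lambda>z::complex. c * inverse z ^ m) (- {0})"
proof (induction k arbitrary: c m)
  case 0
  have "continuous_on (- {0}) (\<lambda>z::complex. c * inverse z ^ m)"
    by (intro continuous_intros) auto
  then show ?case by simp
next
  case (Suc k)
  show ?case
  proof (rule Ck_on_SucI[where f' = "\<lambda>z v. (- c * of_nat m * inverse z ^ Suc m) * v"])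
    fix z :: complex assume "z \<in> - {0}"
    then show "((\<lambda>z. c * inverse z ^ m) has_derivative (*) (- c * of_nat m * inverse z ^ Suc m)) (at z)"
      using inverse_power_has_field_derivative has_field_derivative_imp_has_derivative by blast
  next
    fix v :: complex
    have "Ck_on k (\<lambda>z::complex. (v * (- c * of_nat m)) * inverse z ^ Suc m) (- {0})" by (rule Suc.IH)
    then show "Ck_on k (\<lambda>z. - c * of_nat m * inverse z ^ Suc m * v) (- {0})"
      by (rule Ck_on_cong[rotated 2]) (auto simp: algebra_simps)
  qed auto
qed

lemma smooth_on_inverse: "smooth_on (\<lambda>z::complex. inverse z) (- {0})"
  using Ck_on_inverse_power[of _ 1 1] by (simp add: smooth_on_def)

section \<open>A flat function and bump functions\<close>

definition flat_exp :: "real poly \<Rightarrow> real \<Rightarrow> real" where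
  "flat_exp p t = (if 0 < t then poly p (inverse t) * exp (- inverse t) else 0)"

text \<open>\<open>(p (1/t) e\<^sup>-\<^sup>1\<^sup>/\<^sup>t)' = q (1/t) e\<^sup>-\<^sup>1\<^sup>/\<^sup>t\<close> with \<open>q s = s\<^sup>2 (p s - p' s)\<close>.\<close>
definition flat_exp_deriv_poly :: "real poly \<Rightarrow> real poly" where
  "flat_exp_deriv_poly p = [:0, 0, 1:] * (p - pderiv p)"

lemma poly_times_exp_minus_tendsto_0: "((\<lambda>s. poly (q::real poly) s * exp (- s)) \<longlongrightarrow> 0) at_top"
proof -
  have eq: "poly q s * exp (- s) = (\<Sum>i\<le>degree q. coeff q i * (s ^ i / exp s))" for s :: real
    by (simp add: poly_altdef sum_distrib_right exp_minus divide_inverse mult.assoc)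
  have "((\<lambda>s. \<Sum>i\<le>degree q. coeff q i * (s ^ i / exp s)) \<longlongrightarrow> 0) at_top"
    by (intro tendsto_null_sum tendsto_mult_right_zero tendsto_power_div_exp_0)
  then show ?thesis by (simp only: eq)
qed

lemma flat_exp_div_tendsto_0: "((\<lambda>t. flat_exp p t / t) \<longlongrightarrow> 0) (at (0::real))"
proof -
  have "((\<lambda>t. poly (pCons 0 p) (inverse t) * exp (- inverse t)) \<longlongrightarrow> 0) (at_right (0::real))"
    using filterlim_compose[OF poly_times_exp_minus_tendsto_0[of "pCons 0 p"]
        filterlim_inverse_at_top_right]
    by (simp add: o_def)
  moreover have "eventually (\<lambda>t. poly (pCons 0 p) (inverse t) * exp (- inverse t) = flat_exp p t / t)
      (at_right (0::real))"
    unfolding eventually_at_right_field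
    by (rule exI[of _ 1]) (auto simp: flat_exp_def divide_inverse mult_ac)
  ultimately have "((\<lambda>t. flat_exp p t / t) \<longlongrightarrow> 0) (at_right 0)"
    by (rule Lim_transform_eventually)
  moreover have "((\<lambda>t. flat_exp p t / t) \<longlongrightarrow> 0) (at_left (0::real))"
  proof -
    have "eventually (\<lambda>t. 0 = flat_exp p t / t) (at_left (0::real))"
      unfolding eventually_at_left_field
      by (rule exI[of _ "-1"]) (auto simp: flat_exp_def)
    then show ?thesis by (rule Lim_transform_eventually[OF tendsto_const])
  qed
  ultimately show ?thesis by (simp add: filterlim_at_split)
qed

lemma flat_exp_has_real_derivative:
  "(flat_exp p has_real_derivative flat_exp (flat_exp_deriv_poly p) t) (at t)"
proof -
  consider "0 < t" | "t < 0" | "t = 0" by linarith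
  then show ?thesis
  proof cases
    case 1
    have i: "((\<lambda>t. inverse t) has_real_derivative - (inverse t ^ 2)) (at t)"
      using DERIV_inverse[of t UNIV] 1 by (simp add: power2_eq_square)
    have "((\<lambda>t. poly p (inverse t)) has_real_derivative
        poly (pderiv p) (inverse t) * (- (inverse t ^ 2))) (at t)"
      by (rule DERIV_chain2[OF poly_DERIV i])
    moreover have "((\<lambda>t. exp (- inverse t)) has_real_derivative exp (- inverse t) * (inverse t ^ 2)) (at t)"
      using DERIV_chain2[OF DERIV_exp DERIV_minus[OF i]] by simp
    ultimately have "((\<lambda>t. poly p (inverse t) * exp (- inverse t)) has_real_derivative
        poly (pderiv p) (inverse t) * (- (inverse t ^ 2)) * exp (- inverse t) +
        poly p (inverse t) * (exp (- inverse t) * (inverse t ^ 2))) (at t)"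
      by (rule DERIV_cong[OF DERIV_mult]) (simp add: mult_ac)
    moreover have "poly (pderiv p) (inverse t) * (- (inverse t ^ 2)) * exp (- inverse t) +
        poly p (inverse t) * (exp (- inverse t) * (inverse t ^ 2)) = flat_exp (flat_exp_deriv_poly p) t"
      using 1 by (simp add: flat_exp_def flat_exp_deriv_poly_def algebra_simps power2_eq_square)
    ultimately have "((\<lambda>t. poly p (inverse t) * exp (- inverse t)) has_real_derivative
        flat_exp (flat_exp_deriv_poly p) t) (at t)"
      by simp
    then show ?thesis
      by (rule has_field_derivative_transform_within_open[of _ _ _ "{0<..}"])
         (use 1 in \<open>auto simp: flat_exp_def\<close>)
  next
    case 2
    have "((\<lambda>t. 0) has_real_derivative flat_exp (flat_exp_deriv_poly p) t) (at t)"
      using 2 by (simp add: flat_exp_def)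
    then show ?thesis
      by (rule has_field_derivative_transform_within_open[of _ _ _ "{..<0}"])
         (use 2 in \<open>auto simp: flat_exp_def\<close>)
  next
    case 3
    have "((\<lambda>y. (flat_exp p y - flat_exp p 0) / (y - 0)) \<longlongrightarrow> flat_exp (flat_exp_deriv_poly p) 0)
        (at (0::real))"
      using flat_exp_div_tendsto_0[of p] by (simp add: flat_exp_def)
    then show ?thesis unfolding 3 has_field_derivative_iff by simp
  qed
qed

lemma Ck_on_flat_exp: "Ck_on k (flat_exp p) UNIV"
proof (induction k arbitrary: p)
  case 0
  have "continuous_on UNIV (flat_exp p)"
    using flat_exp_has_real_derivative DERIV_isCont continuous_at_imp_continuous_on by blast
  then show ?case by simp
next
  case (Suc k)
  show ?case
  proof (rule Ck_on_SucI[where f' = "\<lambda>t v. flat_exp (flat_exp_deriv_poly p) t * v"])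
    fix t :: real
    show "(flat_exp p has_derivative (*) (flat_exp (flat_exp_deriv_poly p) t)) (at t)"
      using flat_exp_has_real_derivative has_field_derivative_imp_has_derivative by blast
  next
    fix v :: real
    show "Ck_on k (\<lambda>t. flat_exp (flat_exp_deriv_poly p) t * v) UNIV"
      using Ck_on_bounded_linear[OF bounded_linear_mult_left, of UNIV k "flat_exp (flat_exp_deriv_poly p)" v]
        Suc.IH by simp
  qed simp
qed

lemma smooth_on_flat_exp: "smooth_on (flat_exp p) UNIV"
  by (simp add: smooth_on_def Ck_on_flat_exp)

definition bump :: "'a::euclidean_space \<Rightarrow> real \<Rightarrow> 'a \<Rightarrow> complex" where
  "bump c r y = complex_of_real (flat_exp 1 (r\<^sup>2 - (y - c) \<bullet> (y - c)))"

lemma smooth_on_bump: "smooth_on (bump c r) UNIV"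
proof -
  have G: "smooth_on (\<lambda>y::'a. r\<^sup>2 - (y - c) \<bullet> (y - c)) UNIV"
    by (intro smooth_on_diff smooth_on_const smooth_on_bounded_bilinear[OF bounded_bilinear_inner]
        smooth_on_ident) auto
  have "smooth_on (\<lambda>y::'a. flat_exp 1 (r\<^sup>2 - (y - c) \<bullet> (y - c))) UNIV"
    by (rule smooth_on_compose[OF _ _ G _ smooth_on_flat_exp]) auto
  then show ?thesis unfolding bump_def
    by (rule smooth_on_bounded_linear[OF bounded_linear_of_real, rotated]) simp
qed

lemma bump_nonzero_iff:
  assumes "0 < r"
  shows "bump c r y \<noteq> 0 \<longleftrightarrow> y \<in> ball c r"
proof -
  have "(y - c) \<bullet> (y - c) = (dist y c)\<^sup>2"
    by (simp add: dist_norm power2_norm_eq_inner)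
  moreover have "(dist y c)\<^sup>2 < r\<^sup>2 \<longleftrightarrow> dist y c < r"
    using assms by (smt (verit) power_mono zero_le_dist power_strict_mono pos2)
  ultimately show ?thesis
    by (auto simp: bump_def flat_exp_def dist_commute mem_ball)
qed

lemma Re_bump_nonneg: "0 \<le> Re (bump c r y)"
  by (simp add: bump_def flat_exp_def)

lemma Re_bump_pos_iff: "0 < Re (bump c r y) \<longleftrightarrow> bump c r y \<noteq> 0"
  by (auto simp: bump_def flat_exp_def complex_eq_iff)

section \<open>Smooth functions on a manifold\<close>

lemma tsupp_nonzero: "u x \<noteq> 0 \<Longrightarrow> x \<in> tsupp u"
  unfolding tsupp_def by (rule closure_subset[THEN subsetD]) simp

lemma zero_outside_tsupp: "x \<notin> tsupp u \<Longrightarrow> u x = 0"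
  by (metis tsupp_nonzero)

lemma closed_tsupp: "closed (tsupp u)"
  unfolding tsupp_def by simp

lemma tsupp_mono: "(\<And>x. u x \<noteq> 0 \<Longrightarrow> v x \<noteq> 0) \<Longrightarrow> tsupp u \<subseteq> tsupp v"
  unfolding tsupp_def by (intro closure_mono) auto

lemma tsupp_zero: "tsupp (\<lambda>x. 0) = {}"
  unfolding tsupp_def by simp

lemma tsupp_cnj: "tsupp (\<lambda>x. cnj (u x)) = tsupp u"
  unfolding tsupp_def by simp

lemma tsupp_cmult_subset: "tsupp (\<lambda>x. c * u x) \<subseteq> tsupp u"
  by (rule tsupp_mono) simp

lemma compact_tsupp_subset: "compact K \<Longrightarrow> tsupp u \<subseteq> K \<Longrightarrow> compact (tsupp u)"
  using compact_Int_closed[OF _ closed_tsupp, of K u] by (simp add: Int_absorb1)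

lemma tsupp_sum_subset:
  assumes "finite I"
  shows "tsupp (\<lambda>x. \<Sum>i\<in>I. F i x) \<subseteq> (\<Union>i\<in>I. tsupp (F i))"
  unfolding tsupp_def[of "\<lambda>x. \<Sum>i\<in>I. F i x"]
proof (rule closure_minimal)
  show "{x. (\<Sum>i\<in>I. F i x) \<noteq> 0} \<subseteq> (\<Union>i\<in>I. tsupp (F i))"
    by (auto intro: tsupp_nonzero dest: sum.not_neutral_contains_not_neutral)
  show "closed (\<Union>i\<in>I. tsupp (F i))"
    using assms by (intro closed_UN) (auto simp: closed_tsupp)
qed

lemma compact_tsupp_sum:
  assumes "finite I" "\<And>i. i \<in> I \<Longrightarrow> compact (tsupp (F i)) \<and> tsupp (F i) \<subseteq> S"
  shows "compact (tsupp (\<lambda>x. \<Sum>i\<in>I. F i x)) \<and> tsupp (\<lambda>x. \<Sum>i\<in>I. F i x) \<subseteq> S"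
proof
  have "compact (\<Union>i\<in>I. tsupp (F i))" using assms by (intro compact_UN) auto
  then show "compact (tsupp (\<lambda>x. \<Sum>i\<in>I. F i x))"
    by (rule compact_tsupp_subset[OF _ tsupp_sum_subset[OF assms(1)]])
  show "tsupp (\<lambda>x. \<Sum>i\<in>I. F i x) \<subseteq> S" using tsupp_sum_subset[OF assms(1)] assms(2) by blast
qed

lemma chart_homeomorphism: "is_chart U \<phi> \<Longrightarrow> homeomorphism U (\<phi> ` U) \<phi> (inv_into U \<phi>)"
  unfolding is_chart_def by blast

lemma chart_inv_into: "is_chart U \<phi> \<Longrightarrow> x \<in> U \<Longrightarrow> inv_into U \<phi> (\<phi> x) = x"
  using chart_homeomorphism unfolding homeomorphism_def by blast

lemma chart_inv_into_image:
  "is_chart U \<phi> \<Longrightarrow> z \<in> \<phi> ` U \<Longrightarrow> inv_into U \<phi> z \<in> U \<and> \<phi> (inv_into U \<phi> z) = z"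
  using chart_homeomorphism unfolding homeomorphism_def by blast

lemma open_chart_image:
  assumes "is_chart U \<phi>" "open N"
  shows "open (\<phi> ` (U \<inter> N))"
proof -
  have "openin (top_of_set U) (U \<inter> N)"
    using assms(2) by (simp add: openin_open_Int)
  then have "openin (top_of_set (\<phi> ` U)) (\<phi> ` (U \<inter> N))"
    using homeomorphism_imp_open_map[OF chart_homeomorphism[OF assms(1)]] by blast
  then show ?thesis
    using openin_open_trans assms(1) unfolding is_chart_def by blast
qed

lemma open_chart_vimage:
  assumes "is_chart U \<phi>" "open T"
  shows "open (\<phi> -` T \<inter> U)"
proof -
  have "continuous_on U \<phi>" using chart_homeomorphism[OF assms(1)] unfolding homeomorphism_def by blast
  moreover have "open U" using assms(1) unfolding is_chart_def by blast
  ultimately show ?thesis using continuous_on_open_vimage[of U \<phi>] assms(2) by blast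
qed

lemma compact_chart_inv_image:
  assumes "is_chart U \<phi>" "compact K" "K \<subseteq> \<phi> ` U"
  shows "compact (inv_into U \<phi> ` K)"
proof -
  have "continuous_on (\<phi> ` U) (inv_into U \<phi>)"
    using chart_homeomorphism[OF assms(1)] unfolding homeomorphism_def by blast
  then have "continuous_on K (inv_into U \<phi>)" by (rule continuous_on_subset) (rule assms(3))
  then show ?thesis using assms(2) by (rule compact_continuous_image)
qed

lemma chart_inv_image_subset:
  assumes "is_chart U \<phi>" "K \<subseteq> \<phi> ` V" "V \<subseteq> U"
  shows "inv_into U \<phi> ` K \<subseteq> V"
proof
  fix y assume "y \<in> inv_into U \<phi> ` K"
  then obtain w where "w \<in> V" "y = inv_into U \<phi> (\<phi> w)" using assms(2) by blast
  then show "y \<in> V" using chart_inv_into[OF assms(1)] assms(3) by auto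
qed

definition smooth_fun_on ::
  "('m::topological_space set \<times> ('m \<Rightarrow> real^'n)) set \<Rightarrow> ('m \<Rightarrow> complex) \<Rightarrow> 'm set \<Rightarrow> bool" where
  "smooth_fun_on A u N \<longleftrightarrow> (\<forall>(V, \<psi>)\<in>A. smooth_on (u \<circ> inv_into V \<psi>) (\<psi> ` (V \<inter> N)))"

lemma smooth_fun_iff_on_UNIV: "smooth_fun A u \<longleftrightarrow> smooth_fun_on A u UNIV"
  unfolding smooth_fun_def smooth_fun_on_def by simp

lemma smooth_fun_on_subset: "smooth_fun_on A u N \<Longrightarrow> N' \<subseteq> N \<Longrightarrow> smooth_fun_on A u N'"
  unfolding smooth_fun_on_def by (force intro: smooth_on_subset)

lemma smooth_fun_imp_smooth_fun_on: "smooth_fun A u \<Longrightarrow> smooth_fun_on A u N"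
  using smooth_fun_on_subset smooth_fun_iff_on_UNIV by blast

lemma smooth_fun_on_const: "smooth_fun_on A (\<lambda>x. c) N"
  unfolding smooth_fun_on_def by (simp add: o_def smooth_on_const)

lemma smooth_fun_const: "smooth_fun A (\<lambda>x. c)"
  unfolding smooth_fun_def by (simp add: o_def smooth_on_const)

locale smooth_manifold =
  fixes A :: "('m::t2_space set \<times> ('m \<Rightarrow> real^'n)) set"
  assumes atlas: "smooth_atlas A"
begin

lemma chart_in_atlas: "(U, \<phi>) \<in> A \<Longrightarrow> is_chart U \<phi>"
  using atlas unfolding smooth_atlas_def by blast

lemma atlas_covers: "\<exists>U \<phi>. (U, \<phi>) \<in> A \<and> x \<in> U"
  using atlas unfolding smooth_atlas_def by blast

lemma smooth_transition: "(U, \<phi>) \<in> A \<Longrightarrow> (V, \<psi>) \<in> A \<Longrightarrow> smooth_on (\<psi> \<circ> inv_into U \<phi>) (\<phi> ` (U \<inter> V))"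
  using atlas unfolding smooth_atlas_def by blast

lemma smooth_fun_on_cong:
  assumes N: "open N" and eq: "\<And>x. x \<in> N \<Longrightarrow> u x = v x" and u: "smooth_fun_on A u N"
  shows "smooth_fun_on A v N"
  unfolding smooth_fun_on_def
proof clarify
  fix V \<psi> assume V: "(V, \<psi>) \<in> A"
  note chart = chart_in_atlas[OF V]
  show "smooth_on (v \<circ> inv_into V \<psi>) (\<psi> ` (V \<inter> N))"
  proof (rule smooth_on_cong[OF open_chart_image[OF chart N]])
    show "smooth_on (u \<circ> inv_into V \<psi>) (\<psi> ` (V \<inter> N))" using u V unfolding smooth_fun_on_def by blast
  qed (use chart_inv_into[OF chart] eq in auto)
qed

lemma smooth_fun_localI:
  assumes "\<And>x. \<exists>N. open N \<and> x \<in> N \<and> smooth_fun_on A u N"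
  shows "smooth_fun A u"
  unfolding smooth_fun_def
proof clarify
  fix V \<psi> assume V: "(V, \<psi>) \<in> A"
  note chart = chart_in_atlas[OF V]
  show "smooth_on (u \<circ> inv_into V \<psi>) (\<psi> ` V)"
  proof (rule smooth_on_local)
    show "open (\<psi> ` V)" using chart unfolding is_chart_def by blast
    fix z assume z: "z \<in> \<psi> ` V"
    obtain N where N: "open N" "inv_into V \<psi> z \<in> N" "smooth_fun_on A u N" using assms by blast
    have "z \<in> \<psi> ` (V \<inter> N)"
      using chart_inv_into_image[OF chart z] N(2) by (metis IntI image_eqI)
    moreover have "smooth_on (u \<circ> inv_into V \<psi>) (\<psi> ` (V \<inter> N))"
      using N(3) V unfolding smooth_fun_on_def by blast
    ultimately show "\<exists>N. open N \<and> z \<in> N \<and> smooth_on (u \<circ> inv_into V \<psi>) N"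
      using open_chart_image[OF chart N(1)] by blast
  qed
qed

lemma smooth_fun_on_combine:
  assumes N: "open N" and "smooth_fun_on A u N" "smooth_fun_on A v N"
    and F: "\<And>S (a :: real^'n \<Rightarrow> complex) b. open S \<Longrightarrow> smooth_on a S \<Longrightarrow> smooth_on b S \<Longrightarrow> smooth_on (\<lambda>z. F (a z) (b z)) S"
  shows "smooth_fun_on A (\<lambda>x. F (u x) (v x)) N"
  unfolding smooth_fun_on_def
proof clarify
  fix V \<psi> assume V: "(V, \<psi>) \<in> A"
  have "smooth_on (\<lambda>z. F ((u \<circ> inv_into V \<psi>) z) ((v \<circ> inv_into V \<psi>) z)) (\<psi> ` (V \<inter> N))"
    using F[OF open_chart_image[OF chart_in_atlas[OF V] N]] assms(2,3) V
    unfolding smooth_fun_on_def by blast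
  then show "smooth_on ((\<lambda>x. F (u x) (v x)) \<circ> inv_into V \<psi>) (\<psi> ` (V \<inter> N))" by (simp add: o_def)
qed

lemma smooth_fun_on_mult:
  "open N \<Longrightarrow> smooth_fun_on A u N \<Longrightarrow> smooth_fun_on A v N \<Longrightarrow> smooth_fun_on A (\<lambda>x. u x * v x) N"
  by (rule smooth_fun_on_combine) (auto intro: smooth_on_mult)

lemma smooth_fun_on_inverse:
  assumes N: "open N" and u: "smooth_fun_on A u N" and nonzero: "\<And>x. x \<in> N \<Longrightarrow> u x \<noteq> 0"
  shows "smooth_fun_on A (\<lambda>x. inverse (u x)) N"
  unfolding smooth_fun_on_def
proof clarify
  fix V \<psi> assume V: "(V, \<psi>) \<in> A"
  note chart = chart_in_atlas[OF V]
  have image: "(u \<circ> inv_into V \<psi>) ` (\<psi> ` (V \<inter> N)) \<subseteq> - {0}"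
    using nonzero chart_inv_into[OF chart] by auto
  have "smooth_on (\<lambda>z. inverse ((u \<circ> inv_into V \<psi>) z)) (\<psi> ` (V \<inter> N))"
    by (rule smooth_on_compose[OF open_chart_image[OF chart N] _ _ image smooth_on_inverse])
       (use u V in \<open>auto simp: smooth_fun_on_def\<close>)
  then show "smooth_on ((\<lambda>x. inverse (u x)) \<circ> inv_into V \<psi>) (\<psi> ` (V \<inter> N))" by (simp add: o_def)
qed

lemma smooth_fun_add: "smooth_fun A u \<Longrightarrow> smooth_fun A v \<Longrightarrow> smooth_fun A (\<lambda>x. u x + v x)"
  unfolding smooth_fun_iff_on_UNIV by (rule smooth_fun_on_combine) (auto intro: smooth_on_add)

lemma smooth_fun_mult: "smooth_fun A u \<Longrightarrow> smooth_fun A v \<Longrightarrow> smooth_fun A (\<lambda>x. u x * v x)"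
  by (simp add: smooth_fun_iff_on_UNIV smooth_fun_on_mult)

lemma smooth_fun_cnj: "smooth_fun A u \<Longrightarrow> smooth_fun A (\<lambda>x. cnj (u x))"
  unfolding smooth_fun_iff_on_UNIV
  using smooth_fun_on_combine[of UNIV u u "\<lambda>a b. cnj a"]
    smooth_on_bounded_linear[OF bounded_linear_cnj] by blast

lemma smooth_fun_cmult: "smooth_fun A u \<Longrightarrow> smooth_fun A (\<lambda>x. c * u x)"
  by (rule smooth_fun_mult[OF smooth_fun_const])

lemma smooth_fun_sum:
  "finite I \<Longrightarrow> (\<And>i. i \<in> I \<Longrightarrow> smooth_fun A (F i)) \<Longrightarrow> smooth_fun A (\<lambda>x. \<Sum>i\<in>I. F i x)"
  by (induction I rule: finite_induct) (simp_all add: smooth_fun_const smooth_fun_add)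

lemma smooth_fun_chart_extension:
  assumes U: "(U, \<phi>) \<in> A" and b: "smooth_on b UNIV" and C: "closed C" "C \<subseteq> U"
    and vanish: "\<And>y. y \<in> U \<Longrightarrow> b (\<phi> y) \<noteq> 0 \<Longrightarrow> y \<in> C"
  shows "smooth_fun A (\<lambda>y. if y \<in> U then b (\<phi> y) else 0)"
    (is "smooth_fun A ?\<beta>")
proof (rule smooth_fun_localI)
  fix y
  have "open U" using chart_in_atlas[OF U] unfolding is_chart_def by blast
  have "smooth_fun_on A ?\<beta> U"
    unfolding smooth_fun_on_def
  proof clarify
    fix V \<psi> assume V: "(V, \<psi>) \<in> A"
    note chart = chart_in_atlas[OF V]
    have "smooth_on (\<lambda>z. b ((\<phi> \<circ> inv_into V \<psi>) z)) (\<psi> ` (V \<inter> U))"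
      by (rule smooth_on_compose[OF open_chart_image[OF chart \<open>open U\<close>] open_UNIV
            smooth_transition[OF V U] subset_UNIV b])
    then show "smooth_on (?\<beta> \<circ> inv_into V \<psi>) (\<psi> ` (V \<inter> U))"
      by (rule smooth_on_cong[OF open_chart_image[OF chart \<open>open U\<close>], rotated])
         (auto simp: chart_inv_into[OF chart])
  qed
  moreover have "smooth_fun_on A ?\<beta> (- C)"
    by (rule smooth_fun_on_cong[OF _ _ smooth_fun_on_const[of A 0]]) (use C vanish in auto)
  moreover have "y \<in> U \<or> y \<in> - C" using C(2) by blast
  ultimately show "\<exists>N. open N \<and> y \<in> N \<and> smooth_fun_on A ?\<beta> N"
    using \<open>open U\<close> C(1) by blast
qed

lemma manifold_bump:
  assumes S: "open S" "x \<in> S"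
  obtains \<beta> W where "smooth_fun A \<beta>" "\<forall>y. 0 \<le> Re (\<beta> y)" "open W" "x \<in> W"
    "\<forall>y\<in>W. 0 < Re (\<beta> y)" "compact (tsupp \<beta>)" "tsupp \<beta> \<subseteq> S"
proof -
  obtain U \<phi> where U: "(U, \<phi>) \<in> A" "x \<in> U" using atlas_covers by blast
  note chart = chart_in_atlas[OF U(1)]
  have "open (\<phi> ` (U \<inter> S))" by (rule open_chart_image[OF chart S(1)])
  moreover have "\<phi> x \<in> \<phi> ` (U \<inter> S)" using U S by blast
  ultimately obtain r where r: "r > 0" "cball (\<phi> x) r \<subseteq> \<phi> ` (U \<inter> S)"
    unfolding open_contains_cball by blast
  define \<beta> where "\<beta> y = (if y \<in> U then bump (\<phi> x) r (\<phi> y) else 0)" for y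
  define C where "C = inv_into U \<phi> ` cball (\<phi> x) r"
  define W where "W = \<phi> -` ball (\<phi> x) r \<inter> U"
  have "C \<subseteq> U \<inter> S" unfolding C_def using r(2) by (rule chart_inv_image_subset[OF chart]) blast
  have "compact C" unfolding C_def using r(2) by (intro compact_chart_inv_image[OF chart]) auto
  have C_vanish: "y \<in> C" if "y \<in> U" "bump (\<phi> x) r (\<phi> y) \<noteq> 0" for y
  proof -
    have "\<phi> y \<in> ball (\<phi> x) r" using that(2) bump_nonzero_iff[OF r(1)] by blast
    then have "\<phi> y \<in> cball (\<phi> x) r" by simp
    then show "y \<in> C" unfolding C_def using chart_inv_into[OF chart that(1)] by (metis image_eqI)
  qed
  have "{y. \<beta> y \<noteq> 0} \<subseteq> C"
    using C_vanish by (auto simp: \<beta>_def split: if_splits)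
  then have "tsupp \<beta> \<subseteq> C"
    unfolding tsupp_def using compact_imp_closed[OF \<open>compact C\<close>] by (rule closure_minimal)
  have "open W" unfolding W_def by (rule open_chart_vimage[OF chart open_ball])
  show thesis
  proof
    show "smooth_fun A \<beta>"
      unfolding \<beta>_def
      by (rule smooth_fun_chart_extension[OF U(1) smooth_on_bump compact_imp_closed[OF \<open>compact C\<close>]])
         (use C_vanish \<open>C \<subseteq> U \<inter> S\<close> in auto)
    show "\<forall>y. 0 \<le> Re (\<beta> y)" by (simp add: \<beta>_def Re_bump_nonneg)
    show "\<forall>y\<in>W. 0 < Re (\<beta> y)"
    proof
      fix y assume "y \<in> W"
      then have "bump (\<phi> x) r (\<phi> y) \<noteq> 0" using bump_nonzero_iff[OF r(1)] unfolding W_def by blast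
      then show "0 < Re (\<beta> y)" using \<open>y \<in> W\<close> by (simp add: W_def \<beta>_def Re_bump_pos_iff)
    qed
    show "compact (tsupp \<beta>)" using compact_tsupp_subset[OF \<open>compact C\<close> \<open>tsupp \<beta> \<subseteq> C\<close>] .
    show "tsupp \<beta> \<subseteq> S" using \<open>tsupp \<beta> \<subseteq> C\<close> \<open>C \<subseteq> U \<inter> S\<close> by blast
  qed (use \<open>open W\<close> U r(1) in \<open>auto simp: W_def\<close>)
qed

lemma finite_bump_cover:
  assumes K: "compact K" and cover: "\<And>x. x \<in> K \<Longrightarrow> \<exists>S. open S \<and> x \<in> S \<and> P S"
  obtains D :: "'m set" and \<beta> S W where "finite D"
    "\<And>d. d \<in> D \<Longrightarrow> smooth_fun A (\<beta> d) \<and> compact (tsupp (\<beta> d)) \<and> tsupp (\<beta> d) \<subseteq> S d \<and> P (S d)"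
    "open W" "K \<subseteq> W" "\<And>y. y \<in> W \<Longrightarrow> (\<Sum>d\<in>D. \<beta> d y) \<noteq> 0"
proof -
  have "\<forall>x\<in>K. \<exists>S. open S \<and> x \<in> S \<and> P S" using cover by blast
  then obtain S where S: "\<forall>x\<in>K. open (S x) \<and> x \<in> S x \<and> P (S x)"
    by (rule bchoice[THEN exE])
  define is_bump where "is_bump x \<beta> W \<longleftrightarrow> smooth_fun A \<beta> \<and> (\<forall>y. 0 \<le> Re (\<beta> y)) \<and> open W \<and>
    x \<in> W \<and> (\<forall>y\<in>W. 0 < Re (\<beta> y)) \<and> compact (tsupp \<beta>) \<and> tsupp \<beta> \<subseteq> S x" for x \<beta> W
  have "\<exists>\<beta> W. is_bump x \<beta> W" if "x \<in> K" for x
  proof -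
    have "open (S x)" "x \<in> S x" using S that by auto
    then obtain \<beta> W where "smooth_fun A \<beta>" "\<forall>y. 0 \<le> Re (\<beta> y)" "open W" "x \<in> W"
      "\<forall>y\<in>W. 0 < Re (\<beta> y)" "compact (tsupp \<beta>)" "tsupp \<beta> \<subseteq> S x"
      by (rule manifold_bump)
    then show ?thesis unfolding is_bump_def by blast
  qed
  then have "\<forall>x\<in>K. \<exists>\<beta> W. is_bump x \<beta> W" by blast
  then obtain \<beta> where "\<forall>x\<in>K. \<exists>W. is_bump x (\<beta> x) W"
    by (rule bchoice[THEN exE])
  then obtain W where bump: "\<forall>x\<in>K. is_bump x (\<beta> x) (W x)"
    by (rule bchoice[THEN exE])
  have "\<And>x. x \<in> K \<Longrightarrow> open (W x)" "K \<subseteq> (\<Union>x\<in>K. W x)"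
    using bump unfolding is_bump_def by auto
  then obtain D where D: "D \<subseteq> K" "finite D" "K \<subseteq> (\<Union>x\<in>D. W x)"
    by (rule compactE_image[OF K])
  have "(\<Sum>x\<in>D. \<beta> x y) \<noteq> 0" if y: "y \<in> (\<Union>x\<in>D. W x)" for y
  proof -
    obtain x0 where x0: "x0 \<in> D" "y \<in> W x0" using y by blast
    have "0 < Re (\<beta> x0 y)" using bump D(1) x0 unfolding is_bump_def by blast
    also have "\<dots> \<le> (\<Sum>x\<in>D. Re (\<beta> x y))"
      using bump D unfolding is_bump_def by (rule_tac member_le_sum[OF x0(1)]) blast+
    finally have "0 < Re (\<Sum>x\<in>D. \<beta> x y)" by simp
    then show ?thesis by (metis less_irrefl zero_complex.sel(1))
  qed
  moreover have "open (\<Union>x\<in>D. W x)" using bump D(1) unfolding is_bump_def by blast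
  moreover have "smooth_fun A (\<beta> d) \<and> compact (tsupp (\<beta> d)) \<and> tsupp (\<beta> d) \<subseteq> S d \<and> P (S d)"
    if "d \<in> D" for d
    using that bump D(1) S unfolding is_bump_def by blast
  ultimately show thesis
    using that[of D \<beta> S "\<Union>x\<in>D. W x"] D(2,3) by blast
qed

lemma smooth_fun_decompose:
  assumes u: "smooth_fun A u" "compact (tsupp u)"
    and cover: "\<And>x. x \<in> tsupp u \<Longrightarrow> \<exists>S. open S \<and> x \<in> S \<and> P S"
  obtains D :: "'m set" and v S where "finite D"
    "\<And>d. d \<in> D \<Longrightarrow> smooth_fun A (v d) \<and> compact (tsupp (v d)) \<and> tsupp (v d) \<subseteq> S d \<and> P (S d)"
    "\<And>y. u y = (\<Sum>d\<in>D. v d y)"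
proof -
  obtain D :: "'m set" and \<beta> S W where D: "finite D"
    and \<beta>: "\<And>d. d \<in> D \<Longrightarrow> smooth_fun A (\<beta> d) \<and> compact (tsupp (\<beta> d)) \<and> tsupp (\<beta> d) \<subseteq> S d \<and> P (S d)"
    and W: "open W" "tsupp u \<subseteq> W" and nonzero: "\<And>y. y \<in> W \<Longrightarrow> (\<Sum>d\<in>D. \<beta> d y) \<noteq> 0"
    using finite_bump_cover[OF u(2) cover] by blast
  define v where "v d y = (if y \<in> W then u y * \<beta> d y * inverse (\<Sum>d\<in>D. \<beta> d y) else 0)" for d y
  have "smooth_fun A (v d)" if d: "d \<in> D" for d
  proof (rule smooth_fun_localI)
    fix y
    have "smooth_fun_on A (\<lambda>y. u y * \<beta> d y * inverse (\<Sum>d\<in>D. \<beta> d y)) W"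
      using u(1) \<beta>[OF d] D nonzero \<beta>
      by (intro smooth_fun_on_mult[OF W(1)] smooth_fun_on_inverse[OF W(1)]
          smooth_fun_imp_smooth_fun_on smooth_fun_sum) auto
    then have "smooth_fun_on A (v d) W"
      by (rule smooth_fun_on_cong[OF W(1), rotated]) (simp add: v_def)
    moreover have "smooth_fun_on A (v d) (- tsupp u)"
      by (rule smooth_fun_on_cong[OF _ _ smooth_fun_on_const[of A 0]])
         (auto simp: closed_tsupp v_def zero_outside_tsupp)
    moreover have "y \<in> W \<or> y \<in> - tsupp u" using W(2) by blast
    ultimately show "\<exists>N. open N \<and> y \<in> N \<and> smooth_fun_on A (v d) N"
      using W(1) closed_tsupp[of u] by blast
  qed
  moreover have "tsupp (v d) \<subseteq> tsupp (\<beta> d)" for d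
    by (rule tsupp_mono) (auto simp: v_def split: if_splits)
  moreover have "u y = (\<Sum>d\<in>D. v d y)" for y
  proof (cases "y \<in> W")
    case True
    have "(\<Sum>d\<in>D. v d y) = u y * (\<Sum>d\<in>D. \<beta> d y) * inverse (\<Sum>d\<in>D. \<beta> d y)"
      using True by (simp add: v_def sum_distrib_left sum_distrib_right)
    then show ?thesis using nonzero[OF True] by simp
  next
    case False
    then show ?thesis using W zero_outside_tsupp[of y u] by (auto simp: v_def)
  qed
  ultimately show thesis
    using that[OF D] \<beta> compact_tsupp_subset by (metis subset_trans)
qed

end

section \<open>Formal series of functions\<close>

definition antidiagonal_sum :: "(nat \<Rightarrow> nat \<Rightarrow> 'a::comm_monoid_add) \<Rightarrow> nat \<Rightarrow> 'a" where
  "antidiagonal_sum T r = (\<Sum>i\<le>r. T i (r - i))"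

lemma antidiagonal_sum_cong: "(\<And>i j. T i j = U i j) \<Longrightarrow> antidiagonal_sum T r = antidiagonal_sum U r"
  by (simp add: antidiagonal_sum_def)

lemma antidiagonal_sum_assoc:
  "antidiagonal_sum (\<lambda>a s. antidiagonal_sum (\<lambda>b c. F a b c) s) r =
   antidiagonal_sum (\<lambda>s c. antidiagonal_sum (\<lambda>a b. F a b c) s) r"
proof -
  have "antidiagonal_sum (\<lambda>a s. antidiagonal_sum (\<lambda>b c. F a b c) s) r =
      (\<Sum>(a, b)\<in>(SIGMA a:{..r}. {..r - a}). F a b (r - a - b))"
    by (simp add: antidiagonal_sum_def sum.Sigma)
  also have "\<dots> = (\<Sum>(s, a)\<in>(SIGMA s:{..r}. {..s}). F a (s - a) (r - s))"
    by (rule sum.reindex_bij_witness[where i = "\<lambda>(s, a). (a, s - a)" and j = "\<lambda>(a, b). (a + b, a)"])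
       auto
  also have "\<dots> = antidiagonal_sum (\<lambda>s c. antidiagonal_sum (\<lambda>a b. F a b c) s) r"
    by (simp add: antidiagonal_sum_def sum.Sigma)
  finally show ?thesis .
qed

lemma antidiagonal_sum_swap: "antidiagonal_sum T r = antidiagonal_sum (\<lambda>i j. T j i) r"
  unfolding antidiagonal_sum_def
  by (rule sum.reindex_bij_witness[where i = "\<lambda>i. r - i" and j = "\<lambda>i. r - i"]) auto

lemma antidiagonal_sum_exchange:
  "antidiagonal_sum (\<lambda>k s. antidiagonal_sum (\<lambda>j t. F k j t) s) r =
   antidiagonal_sum (\<lambda>j s. antidiagonal_sum (\<lambda>k t. F k j t) s) r"
proof -
  have "antidiagonal_sum (\<lambda>k s. antidiagonal_sum (\<lambda>j t. F k j t) s) r =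
      antidiagonal_sum (\<lambda>s c. antidiagonal_sum (\<lambda>k j. F k j c) s) r"
    by (rule antidiagonal_sum_assoc)
  also have "\<dots> = antidiagonal_sum (\<lambda>s c. antidiagonal_sum (\<lambda>j k. F k j c) s) r"
    by (rule antidiagonal_sum_cong, rule antidiagonal_sum_swap)
  also have "\<dots> = antidiagonal_sum (\<lambda>j s. antidiagonal_sum (\<lambda>k c. F k j c) s) r"
    by (rule antidiagonal_sum_assoc[symmetric])
  finally show ?thesis .
qed

lemma antidiagonal_sum_cmult:
  fixes T :: "nat \<Rightarrow> nat \<Rightarrow> 'a::semiring_0"
  shows "antidiagonal_sum (\<lambda>i j. c * T i j) r = c * antidiagonal_sum T r"
  by (simp add: antidiagonal_sum_def sum_distrib_left)

lemma star_eq_antidiagonal_sum: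
  "star Mr f g r x = antidiagonal_sum (\<lambda>k s. antidiagonal_sum (\<lambda>i l. Mr k (f i) (g l) x) s) r"
  by (simp add: star_def antidiagonal_sum_def)

lemma series_smult_eq_antidiagonal_sum:
  "series_smult a f r x = antidiagonal_sum (\<lambda>i j. fps_nth a i * f j x) r"
  by (simp add: series_smult_def antidiagonal_sum_def)

definition fps_cnj :: "complex fps \<Rightarrow> complex fps" where
  "fps_cnj a = Abs_fps (\<lambda>n. cnj (fps_nth a n))"

lemma fps_cnj_nth [simp]: "fps_nth (fps_cnj a) n = cnj (fps_nth a n)"
  by (simp add: fps_cnj_def)

lemma fps_cnj_cnj [simp]: "fps_cnj (fps_cnj a) = a"
  by (simp add: fps_eq_iff)

lemma fps_cnj_monom: "fps_cnj (fps_const t * fps_X ^ p) = fps_const (cnj t) * fps_X ^ p"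
  by (simp add: fps_eq_iff)

lemma series_cnj_add: "series_cnj (series_add f g) = series_add (series_cnj f) (series_cnj g)"
  by (simp add: series_cnj_def series_add_def)

lemma series_cnj_smult: "series_cnj (series_smult a f) = series_smult (fps_cnj a) (series_cnj f)"
  by (simp add: series_cnj_def series_smult_def)

lemma series_cnj_cnj [simp]: "series_cnj (series_cnj f) = f"
  by (simp add: series_cnj_def)

definition series_monomial :: "nat \<Rightarrow> ('m \<Rightarrow> complex) \<Rightarrow> 'm fseries" where
  "series_monomial r u = (\<lambda>k x. if k = r then u x else 0)"

lemma series_split_at:
  "h = series_add (\<lambda>k x. \<Sum>r\<le>N. series_monomial r (h r) k x)
         (series_smult (fps_X ^ Suc N) (\<lambda>k. h (k + Suc N)))"
proof (intro ext)
  fix k x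
  have "series_smult (fps_X ^ Suc N) (\<lambda>k. h (k + Suc N)) k x =
      (\<Sum>i\<le>k. if i = Suc N then h (k - i + Suc N) x else 0)"
    unfolding series_smult_def fps_X_power_nth by (intro sum.cong) simp_all
  also have "\<dots> = (if Suc N \<le> k then h k x else 0)"
    by (subst sum.delta) simp_all
  finally show "h k x = series_add (\<lambda>k x. \<Sum>r\<le>N. series_monomial r (h r) k x)
      (series_smult (fps_X ^ Suc N) (\<lambda>k. h (k + Suc N))) k x"
    by (simp add: series_add_def series_monomial_def)
qed

lemma C0_coeff_smooth: "f \<in> C0 A S \<Longrightarrow> smooth_fun A (f r)"
  unfolding C0_def smooth_series_def by blast

lemma C0_coeff_tsupp: "f \<in> C0 A S \<Longrightarrow> compact (tsupp (f r)) \<and> tsupp (f r) \<subseteq> S"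
  unfolding C0_def by blast

lemma C0I:
  "(\<And>r. smooth_fun A (f r)) \<Longrightarrow> (\<And>r. compact (tsupp (f r)) \<and> tsupp (f r) \<subseteq> S) \<Longrightarrow> f \<in> C0 A S"
  unfolding C0_def smooth_series_def by blast

lemma C0_imp_smooth_series: "f \<in> C0 A S \<Longrightarrow> smooth_series A f"
  unfolding C0_def by blast

lemma C0_mono: "f \<in> C0 A S \<Longrightarrow> S \<subseteq> T \<Longrightarrow> f \<in> C0 A T"
  unfolding C0_def by blast

lemma C0_zero: "(\<lambda>k x. 0) \<in> C0 A S"
  by (rule C0I) (simp_all add: smooth_fun_const tsupp_zero)

lemma C0_monomial:
  assumes "smooth_fun A u" "compact (tsupp u)" "tsupp u \<subseteq> S"
  shows "series_monomial r u \<in> C0 A S"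
proof (rule C0I)
  fix k
  show "smooth_fun A (series_monomial r u k)"
    using assms by (cases "k = r") (simp_all add: series_monomial_def smooth_fun_const)
  show "compact (tsupp (series_monomial r u k)) \<and> tsupp (series_monomial r u k) \<subseteq> S"
    using assms by (cases "k = r") (simp_all add: series_monomial_def tsupp_zero)
qed

lemma C0_shift: "h \<in> C0 A S \<Longrightarrow> (\<lambda>k. h (k + n)) \<in> C0 A S"
  unfolding C0_def smooth_series_def by blast

lemma C0_ssupp:
  assumes f: "f \<in> C0 A UNIV"
  shows "f \<in> C0 A (ssupp f)"
proof (rule C0I)
  fix r
  show "smooth_fun A (f r)" by (rule C0_coeff_smooth[OF f])
  have "tsupp (f r) \<subseteq> (\<Union>r. tsupp (f r))" by blast
  also have "\<dots> \<subseteq> ssupp f" unfolding ssupp_def by (rule closure_subset)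
  finally have "tsupp (f r) \<subseteq> ssupp f" .
  then show "compact (tsupp (f r)) \<and> tsupp (f r) \<subseteq> ssupp f" using C0_coeff_tsupp[OF f] by simp
qed

context smooth_manifold
begin

lemma C0_cnj: "f \<in> C0 A S \<Longrightarrow> series_cnj f \<in> C0 A S"
  unfolding series_cnj_def
  by (rule C0I) (auto simp: tsupp_cnj intro: smooth_fun_cnj C0_coeff_smooth dest: C0_coeff_tsupp)

lemma smooth_series_cnj: "smooth_series A f \<Longrightarrow> smooth_series A (series_cnj f)"
  by (simp add: smooth_series_def series_cnj_def smooth_fun_cnj)

lemma C0_sum:
  assumes "finite I" "\<And>i. i \<in> I \<Longrightarrow> F i \<in> C0 A S"
  shows "(\<lambda>k x. \<Sum>i\<in>I. F i k x) \<in> C0 A S"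
proof (rule C0I)
  fix r
  show "smooth_fun A (\<lambda>x. \<Sum>i\<in>I. F i r x)"
    using assms by (intro smooth_fun_sum) (auto intro: C0_coeff_smooth)
  show "compact (tsupp (\<lambda>x. \<Sum>i\<in>I. F i r x)) \<and> tsupp (\<lambda>x. \<Sum>i\<in>I. F i r x) \<subseteq> S"
    using assms by (intro compact_tsupp_sum) (auto dest: C0_coeff_tsupp)
qed

lemma C0_add: "f \<in> C0 A S \<Longrightarrow> g \<in> C0 A S \<Longrightarrow> series_add f g \<in> C0 A S"
  using C0_sum[of "{True, False}" "\<lambda>b. if b then f else g" S]
  by (simp add: series_add_def)

lemma smooth_series_add: "smooth_series A f \<Longrightarrow> smooth_series A g \<Longrightarrow> smooth_series A (series_add f g)"
  by (simp add: smooth_series_def series_add_def smooth_fun_add)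

lemma smooth_series_smult: "smooth_series A f \<Longrightarrow> smooth_series A (series_smult a f)"
  unfolding smooth_series_def series_smult_def
  by (intro allI smooth_fun_sum smooth_fun_cmult) auto

lemma C0_smult:
  assumes f: "f \<in> C0 A S"
  shows "series_smult a f \<in> C0 A S"
proof (rule C0I)
  fix r
  show "smooth_fun A (series_smult a f r)"
    using smooth_series_smult[OF C0_imp_smooth_series[OF f]] by (simp add: smooth_series_def)
  show "compact (tsupp (series_smult a f r)) \<and> tsupp (series_smult a f r) \<subseteq> S"
    unfolding series_smult_def
  proof (rule compact_tsupp_sum)
    fix i
    show "compact (tsupp (\<lambda>x. fps_nth a i * f (r - i) x)) \<and> tsupp (\<lambda>x. fps_nth a i * f (r - i) x) \<subseteq> S"
      using C0_coeff_tsupp[OF f, of "r - i"] tsupp_cmult_subset compact_tsupp_subset by blast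
  qed simp
qed

end

section \<open>Star products\<close>

locale star_manifold = smooth_manifold A
  for A :: "('m::t2_space set \<times> ('m \<Rightarrow> real^'n)) set" +
  fixes pb :: "('m \<Rightarrow> complex) \<Rightarrow> ('m \<Rightarrow> complex) \<Rightarrow> ('m \<Rightarrow> complex)"
    and Mr :: "nat \<Rightarrow> ('m \<Rightarrow> complex) \<Rightarrow> ('m \<Rightarrow> complex) \<Rightarrow> ('m \<Rightarrow> complex)"
  assumes star_product: "star_product A pb Mr"
begin

lemmas Mr_properties = star_product[unfolded star_product_def, THEN conjunct1, rule_format]

lemma Mr_smooth: "smooth_fun A f \<Longrightarrow> smooth_fun A g \<Longrightarrow> smooth_fun A (Mr k f g)"
  using Mr_properties[of f g f k] by blast

lemma Mr_add_left: "smooth_fun A f \<Longrightarrow> smooth_fun A g \<Longrightarrow> smooth_fun A h \<Longrightarrow>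
    Mr k (\<lambda>x. f x + g x) h = (\<lambda>x. Mr k f h x + Mr k g h x)"
  using Mr_properties[of f g h k] by blast

lemma Mr_add_right: "smooth_fun A f \<Longrightarrow> smooth_fun A g \<Longrightarrow> smooth_fun A h \<Longrightarrow>
    Mr k h (\<lambda>x. f x + g x) = (\<lambda>x. Mr k h f x + Mr k h g x)"
  using Mr_properties[of f g h k] by blast

lemma Mr_cmult_left: "smooth_fun A f \<Longrightarrow> smooth_fun A g \<Longrightarrow> Mr k (\<lambda>x. c * f x) g = (\<lambda>x. c * Mr k f g x)"
  using Mr_properties[of f g f k c] by blast

lemma Mr_tsupp_subset: "smooth_fun A f \<Longrightarrow> smooth_fun A g \<Longrightarrow> tsupp (Mr k f g) \<subseteq> tsupp f \<inter> tsupp g"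
  using Mr_properties[of f g f k] by blast

lemma Mr_cnj:
  "smooth_fun A f \<Longrightarrow> smooth_fun A g \<Longrightarrow> cnj (Mr k f g x) = Mr k (\<lambda>x. cnj (g x)) (\<lambda>x. cnj (f x)) x"
  using Mr_properties[of f g f k] by (metis (mono_tags))

lemma star_assoc: "smooth_series A f \<Longrightarrow> smooth_series A g \<Longrightarrow> smooth_series A h \<Longrightarrow>
    star Mr (star Mr f g) h = star Mr f (star Mr g h)"
  using star_product unfolding star_product_def by blast

lemma Mr_sum_left:
  assumes "finite J" "\<And>j. j \<in> J \<Longrightarrow> smooth_fun A (u j)" "smooth_fun A v"
  shows "Mr k (\<lambda>x. \<Sum>j\<in>J. c j * u j x) v = (\<lambda>x. \<Sum>j\<in>J. c j * Mr k (u j) v x)"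
  using assms(1,2)
proof (induction J rule: finite_induct)
  case empty
  then show ?case using Mr_cmult_left[OF assms(3,3), of k 0] by simp
next
  case (insert j J)
  then have "Mr k (\<lambda>x. c j * u j x + (\<Sum>j\<in>J. c j * u j x)) v =
      (\<lambda>x. Mr k (\<lambda>x. c j * u j x) v x + Mr k (\<lambda>x. \<Sum>j\<in>J. c j * u j x) v x)"
    by (intro Mr_add_left assms(3) smooth_fun_cmult smooth_fun_sum) auto
  then show ?case using insert Mr_cmult_left[of "u j" v k "c j"] assms(3) by simp
qed

lemma smooth_star: "smooth_series A f \<Longrightarrow> smooth_series A g \<Longrightarrow> smooth_fun A (star Mr f g r)"
  unfolding star_def smooth_series_def
  by (intro smooth_fun_sum Mr_smooth) auto

lemma smooth_series_star: "smooth_series A f \<Longrightarrow> smooth_series A g \<Longrightarrow> smooth_series A (star Mr f g)"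
  using smooth_star by (simp add: smooth_series_def)

lemma C0_star_right:
  assumes f: "f \<in> C0 A S" and g: "smooth_series A g"
  shows "star Mr f g \<in> C0 A S"
proof (rule C0I)
  fix r
  show "smooth_fun A (star Mr f g r)"
    using smooth_star[OF C0_imp_smooth_series[OF f] g] .
  have "compact (tsupp (Mr k (f i) (g l))) \<and> tsupp (Mr k (f i) (g l)) \<subseteq> S" for k i l
  proof -
    have "tsupp (Mr k (f i) (g l)) \<subseteq> tsupp (f i)"
      using Mr_tsupp_subset C0_coeff_smooth[OF f] g by (auto simp: smooth_series_def)
    then show ?thesis using C0_coeff_tsupp[OF f, of i] compact_tsupp_subset by blast
  qed
  then show "compact (tsupp (star Mr f g r)) \<and> tsupp (star Mr f g r) \<subseteq> S"
    unfolding star_def by (intro compact_tsupp_sum) simp_all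
qed

lemma series_cnj_star:
  assumes f: "smooth_series A f" and g: "smooth_series A g"
  shows "series_cnj (star Mr f g) = star Mr (series_cnj g) (series_cnj f)"
proof (intro ext)
  fix r x
  have "series_cnj (star Mr f g) r x =
      antidiagonal_sum (\<lambda>k s. antidiagonal_sum (\<lambda>i l. cnj (Mr k (f i) (g l) x)) s) r"
    by (simp add: series_cnj_def star_eq_antidiagonal_sum antidiagonal_sum_def)
  also have "\<dots> = antidiagonal_sum (\<lambda>k s. antidiagonal_sum (\<lambda>i l. Mr k (series_cnj g l) (series_cnj f i) x) s) r"
    using f g by (simp add: Mr_cnj series_cnj_def smooth_series_def)
  also have "\<dots> = antidiagonal_sum (\<lambda>k s. antidiagonal_sum (\<lambda>l i. Mr k (series_cnj g l) (series_cnj f i) x) s) r"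
    by (rule antidiagonal_sum_cong, rule antidiagonal_sum_swap)
  also have "\<dots> = star Mr (series_cnj g) (series_cnj f) r x"
    by (simp only: star_eq_antidiagonal_sum)
  finally show "series_cnj (star Mr f g) r x = star Mr (series_cnj g) (series_cnj f) r x" .
qed

lemma star_eq_cnj_star_cnj:
  "smooth_series A f \<Longrightarrow> smooth_series A g \<Longrightarrow>
    star Mr f g = series_cnj (star Mr (series_cnj g) (series_cnj f))"
  by (simp add: series_cnj_star smooth_series_cnj)

lemma C0_star_left:
  assumes f: "smooth_series A f" and g: "g \<in> C0 A S"
  shows "star Mr f g \<in> C0 A S"
  unfolding star_eq_cnj_star_cnj[OF f C0_imp_smooth_series[OF g]]
  by (intro C0_cnj C0_star_right smooth_series_cnj f g)

lemma star_add_left: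
  "smooth_series A f \<Longrightarrow> smooth_series A g \<Longrightarrow> smooth_series A h \<Longrightarrow>
    star Mr (series_add f g) h = series_add (star Mr f h) (star Mr g h)"
  unfolding smooth_series_def star_def series_add_def by (simp add: Mr_add_left sum.distrib)

lemma star_add_right:
  "smooth_series A f \<Longrightarrow> smooth_series A g \<Longrightarrow> smooth_series A h \<Longrightarrow>
    star Mr h (series_add f g) = series_add (star Mr h f) (star Mr h g)"
  unfolding smooth_series_def star_def series_add_def by (simp add: Mr_add_right sum.distrib)

lemma star_smult_left:
  assumes f: "smooth_series A f" and g: "smooth_series A g"
  shows "star Mr (series_smult a f) g = series_smult a (star Mr f g)"
proof (intro ext)
  fix r x
  let ?S = antidiagonal_sum
  have Mr_smult: "Mr k (series_smult a f i) (g l) x = ?S (\<lambda>j m. fps_nth a j * Mr k (f m) (g l) x) i"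
    for k i l
  proof -
    have "Mr k (series_smult a f i) (g l) = (\<lambda>x. \<Sum>j\<le>i. fps_nth a j * Mr k (f (i - j)) (g l) x)"
      unfolding series_smult_def
      using Mr_sum_left[of "{..i}" "\<lambda>j. f (i - j)" "g l" k "\<lambda>j. fps_nth a j"] f g
      by (simp add: smooth_series_def)
    then show ?thesis by (simp add: antidiagonal_sum_def)
  qed
  have "star Mr (series_smult a f) g r x =
      ?S (\<lambda>k s. ?S (\<lambda>i l. ?S (\<lambda>j m. fps_nth a j * Mr k (f m) (g l) x) i) s) r"
    by (simp only: star_eq_antidiagonal_sum Mr_smult)
  also have "\<dots> = ?S (\<lambda>k s. ?S (\<lambda>j t. ?S (\<lambda>m l. fps_nth a j * Mr k (f m) (g l) x) t) s) r"
    by (rule antidiagonal_sum_cong, rule antidiagonal_sum_assoc[symmetric])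
  also have "\<dots> = ?S (\<lambda>k s. ?S (\<lambda>j t. fps_nth a j * ?S (\<lambda>m l. Mr k (f m) (g l) x) t) s) r"
    by (simp only: antidiagonal_sum_cmult)
  also have "\<dots> = ?S (\<lambda>j s. ?S (\<lambda>k t. fps_nth a j * ?S (\<lambda>m l. Mr k (f m) (g l) x) t) s) r"
    by (rule antidiagonal_sum_exchange)
  also have "\<dots> = ?S (\<lambda>j s. fps_nth a j * ?S (\<lambda>k t. ?S (\<lambda>m l. Mr k (f m) (g l) x) t) s) r"
    by (simp only: antidiagonal_sum_cmult)
  also have "\<dots> = series_smult a (star Mr f g) r x"
    by (simp only: series_smult_eq_antidiagonal_sum star_eq_antidiagonal_sum)
  finally show "star Mr (series_smult a f) g r x = series_smult a (star Mr f g) r x" .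
qed

lemma star_smult_right:
  assumes f: "smooth_series A f" and g: "smooth_series A g"
  shows "star Mr f (series_smult a g) = series_smult a (star Mr f g)"
proof -
  have "star Mr f (series_smult a g) =
      series_cnj (star Mr (series_smult (fps_cnj a) (series_cnj g)) (series_cnj f))"
    using star_eq_cnj_star_cnj[OF f smooth_series_smult[OF g]] by (simp add: series_cnj_smult)
  also have "\<dots> = series_smult a (series_cnj (star Mr (series_cnj g) (series_cnj f)))"
    using g f by (simp add: star_smult_left smooth_series_cnj series_cnj_smult)
  also have "\<dots> = series_smult a (star Mr f g)"
    by (simp add: star_eq_cnj_star_cnj[OF f g])
  finally show ?thesis .
qed

lemma star_eq_0_if_disjoint:
  assumes u: "smooth_series A u" and v: "smooth_series A v"
    and disjoint: "\<And>i l. tsupp (u i) \<inter> tsupp (v l) = {}"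
  shows "star Mr u v = (\<lambda>k x. 0)"
proof -
  have "Mr k (u i) (v l) x = 0" for k i l x
    using Mr_tsupp_subset[of "u i" "v l" k] u v disjoint[of i l] zero_outside_tsupp
    unfolding smooth_series_def by blast
  then show ?thesis unfolding star_def by simp
qed

end

section \<open>Supports of functionals\<close>

lemma func_supp_subset_Compl:
  assumes "open S" "\<forall>g\<in>C0 A S. \<psi> g = 0"
  shows "func_supp A \<psi> \<subseteq> - S"
  using assms unfolding func_supp_def by blast

lemma func_supp_subset_if_vanishing:
  assumes "\<And>S. open S \<Longrightarrow> \<forall>g\<in>C0 A S. \<phi> g = 0 \<Longrightarrow> \<forall>g\<in>C0 A S. \<psi> g = 0"
  shows "func_supp A \<psi> \<subseteq> func_supp A \<phi>"
  using assms unfolding func_supp_def by blast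

lemma func_supp_subset_Un_if_vanishing:
  assumes "\<And>S. open S \<Longrightarrow> \<forall>g\<in>C0 A S. \<phi>\<^sub>1 g = 0 \<Longrightarrow> \<forall>g\<in>C0 A S. \<phi>\<^sub>2 g = 0 \<Longrightarrow> \<forall>g\<in>C0 A S. \<psi> g = 0"
  shows "func_supp A \<psi> \<subseteq> func_supp A \<phi>\<^sub>1 \<union> func_supp A \<phi>\<^sub>2"
proof
  fix x assume x: "x \<in> func_supp A \<psi>"
  show "x \<in> func_supp A \<phi>\<^sub>1 \<union> func_supp A \<phi>\<^sub>2"
  proof (rule ccontr)
    assume "x \<notin> func_supp A \<phi>\<^sub>1 \<union> func_supp A \<phi>\<^sub>2"
    then obtain S\<^sub>1 S\<^sub>2 where S: "open S\<^sub>1" "x \<in> S\<^sub>1" "\<forall>g\<in>C0 A S\<^sub>1. \<phi>\<^sub>1 g = 0"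
      "open S\<^sub>2" "x \<in> S\<^sub>2" "\<forall>g\<in>C0 A S\<^sub>2. \<phi>\<^sub>2 g = 0"
      unfolding func_supp_def by blast
    then have "\<forall>g\<in>C0 A (S\<^sub>1 \<inter> S\<^sub>2). \<phi>\<^sub>1 g = 0" "\<forall>g\<in>C0 A (S\<^sub>1 \<inter> S\<^sub>2). \<phi>\<^sub>2 g = 0"
      using C0_mono[of _ A "S\<^sub>1 \<inter> S\<^sub>2"] by blast+
    then have "\<forall>g\<in>C0 A (S\<^sub>1 \<inter> S\<^sub>2). \<psi> g = 0" using assms S by blast
    then show False using x S unfolding func_supp_def by blast
  qed
qed

locale manifold_functional = smooth_manifold A
  for A :: "('m::t2_space set \<times> ('m \<Rightarrow> real^'n)) set" +
  fixes \<omega> :: "'m fseries \<Rightarrow> complex fps"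
  assumes linear: "lin_functional A \<omega>"
begin

lemma functional_add: "f \<in> C0 A UNIV \<Longrightarrow> g \<in> C0 A UNIV \<Longrightarrow> \<omega> (series_add f g) = \<omega> f + \<omega> g"
  using linear unfolding lin_functional_def by blast

lemma functional_smult: "f \<in> C0 A UNIV \<Longrightarrow> \<omega> (series_smult a f) = a * \<omega> f"
  using linear unfolding lin_functional_def by blast

lemma functional_zero: "\<omega> (\<lambda>k x. 0) = 0"
proof -
  have "series_add (\<lambda>k x. 0) (\<lambda>k x. 0) = (\<lambda>k (x::'m). 0::complex)" by (simp add: series_add_def)
  then have "\<omega> (\<lambda>k x. 0) = \<omega> (\<lambda>k x. 0) + \<omega> (\<lambda>k x. 0)"
    using functional_add[OF C0_zero C0_zero] by metis
  then show ?thesis by simp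
qed

lemma functional_sum:
  assumes "finite I" "\<And>i. i \<in> I \<Longrightarrow> F i \<in> C0 A UNIV"
  shows "\<omega> (\<lambda>k x. \<Sum>i\<in>I. F i k x) = (\<Sum>i\<in>I. \<omega> (F i))"
  using assms
proof (induction I rule: finite_induct)
  case empty
  then show ?case using functional_zero by simp
next
  case (insert i I)
  have "(\<lambda>k x. \<Sum>i\<in>insert i I. F i k x) = series_add (F i) (\<lambda>k x. \<Sum>i\<in>I. F i k x)"
    using insert by (simp add: series_add_def)
  moreover have "(\<lambda>k x. \<Sum>i\<in>I. F i k x) \<in> C0 A UNIV"
    using insert by (intro C0_sum) auto
  ultimately show ?case using insert functional_add by simp
qed

lemma functional_monomial_eq_0:
  assumes u: "smooth_fun A u" "compact (tsupp u)" and disjoint: "tsupp u \<inter> func_supp A \<omega> = {}"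
  shows "\<omega> (series_monomial r u) = 0"
proof -
  have cover: "\<exists>S. open S \<and> x \<in> S \<and> (\<forall>f\<in>C0 A S. \<omega> f = 0)" if "x \<in> tsupp u" for x
    using disjoint that unfolding func_supp_def by blast
  show ?thesis
  proof (rule smooth_fun_decompose[OF u cover])
    fix D :: "'m set" and v S
    assume D: "finite D"
      and v: "\<And>d. d \<in> D \<Longrightarrow> smooth_fun A (v d) \<and> compact (tsupp (v d)) \<and> tsupp (v d) \<subseteq> S d \<and>
        (\<forall>f\<in>C0 A (S d). \<omega> f = 0)"
      and u_eq: "\<And>y. u y = (\<Sum>d\<in>D. v d y)"
    have "series_monomial r u = (\<lambda>k x. \<Sum>d\<in>D. series_monomial r (v d) k x)"
      using u_eq by (auto simp: series_monomial_def fun_eq_iff)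
    then have "\<omega> (series_monomial r u) = (\<Sum>d\<in>D. \<omega> (series_monomial r (v d)))"
      using D v by (simp add: functional_sum C0_monomial)
    also have "\<dots> = 0"
      using v C0_monomial by (intro sum.neutral) blast
    finally show ?thesis .
  qed
qed

text \<open>The series is handled order by order: in \<open>h = head + \<lambda>\<^sup>N\<^sup>+\<^sup>1 tail\<close> only the finitely many
  monomials of \<open>head\<close> contribute to the coefficient of order \<open>N\<close>.\<close>
lemma functional_eq_0_if_disjoint:
  assumes h: "h \<in> C0 A UNIV" and disjoint: "\<And>r. tsupp (h r) \<inter> func_supp A \<omega> = {}"
  shows "\<omega> h = 0"
proof (rule fps_ext)
  fix N
  define head where "head = (\<lambda>k x. \<Sum>r\<le>N. series_monomial r (h r) k x)"
  define tail where "tail = (\<lambda>k. h (k + Suc N))"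
  have head: "head \<in> C0 A UNIV" unfolding head_def
    using h by (intro C0_sum C0_monomial) (auto dest: C0_coeff_tsupp intro: C0_coeff_smooth)
  have tail: "tail \<in> C0 A UNIV" unfolding tail_def using C0_shift[OF h] .
  have "\<omega> head = (\<Sum>r\<le>N. \<omega> (series_monomial r (h r)))"
    unfolding head_def using h
    by (intro functional_sum C0_monomial) (auto dest: C0_coeff_tsupp intro: C0_coeff_smooth)
  also have "\<dots> = 0"
    using h disjoint
    by (intro sum.neutral ballI functional_monomial_eq_0) (auto dest: C0_coeff_tsupp intro: C0_coeff_smooth)
  finally have "\<omega> head = 0" .
  have "h = series_add head (series_smult (fps_X ^ Suc N) tail)"
    unfolding head_def tail_def by (rule series_split_at)
  then have "\<omega> h = \<omega> (series_add head (series_smult (fps_X ^ Suc N) tail))" by (rule arg_cong)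
  also have "\<dots> = \<omega> head + fps_X ^ Suc N * \<omega> tail"
    using functional_add[OF head C0_smult[OF tail]] functional_smult[OF tail] by simp
  finally have "\<omega> h = \<omega> head + fps_X ^ Suc N * \<omega> tail" .
  then have "fps_nth (\<omega> h) N = fps_nth (fps_X ^ Suc N * \<omega> tail) N"
    using \<open>\<omega> head = 0\<close> by simp
  also have "\<dots> = 0" by (simp only: fps_X_power_mult_nth) simp
  finally show "fps_nth (\<omega> h) N = fps_nth 0 N" by simp
qed

end

section \<open>Positive functionals and the GNS vectors\<close>

lemma fps_nonneg_lowest_coeff_pos:
  assumes "fps_nonneg E" "\<And>n. n < N \<Longrightarrow> fps_nth E n = 0" "fps_nth E N \<noteq> 0"
  shows "0 < Re (fps_nth E N)"
proof -
  have "subdegree E = N" using assms(2,3) by (intro subdegreeI) auto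
  moreover have "E \<noteq> 0" using assms(3) by auto
  ultimately show ?thesis using assms(1) unfolding fps_nonneg_def by simp
qed

text \<open>The formal Cauchy--Schwarz inequality, with \<open>c = \<omega> (a\<^sup>* * b)\<close>, \<open>c' = \<omega> (b\<^sup>* * a)\<close>,
  \<open>d = \<omega> (b\<^sup>* * b)\<close> and \<open>\<omega> (a\<^sup>* * a) = 0\<close>. With \<open>s = t \<lambda>\<^sup>p\<close> and \<open>p\<close> beyond the first
  order \<open>q\<close> at which \<open>t c + cnj t c'\<close> is nonzero, the term \<open>cnj s s d\<close> starts at order
  \<open>2p > p + q\<close>, so the lowest coefficient is that of \<open>t c + cnj t c'\<close> and changes sign with \<open>t\<close>.
  Hence \<open>t c + cnj t c' = 0\<close> for all \<open>t\<close>; \<open>t = 1\<close> and \<open>t = \<i>\<close> give \<open>c = 0\<close>.\<close>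
lemma fps_nonneg_perturbation_imp_zero:
  fixes c c' d :: "complex fps"
  assumes nonneg: "\<And>t p. fps_nonneg (fps_const t * fps_X ^ p * c + fps_const (cnj t) * fps_X ^ p * c'
                 + fps_const (cnj t) * fps_X ^ p * (fps_const t * fps_X ^ p * d))"
  shows "c = 0"
proof -
  define e where "e t m = t * fps_nth c m + cnj t * fps_nth c' m" for t m
  define E where "E t p = fps_const t * fps_X ^ p * c + fps_const (cnj t) * fps_X ^ p * c'
                 + fps_const (cnj t) * fps_X ^ p * (fps_const t * fps_X ^ p * d)" for t p
  have E_nth: "fps_nth (E t p) n = (if n < p then 0 else e t (n - p)) +
      (if n < p then 0 else if n - p < p then 0 else cnj t * (t * fps_nth d (n - p - p)))" for t p n
    unfolding E_def e_def by (simp add: mult.assoc fps_X_power_mult_nth)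
  have e_zero: "e t m = 0" for t m
  proof (rule ccontr)
    assume "e t m \<noteq> 0"
    define q where "q = (LEAST m. e t m \<noteq> 0)"
    have eq: "e t q \<noteq> 0" unfolding q_def using \<open>e t m \<noteq> 0\<close> by (rule LeastI)
    have below_q: "e t m' = 0" if "m' < q" for m'
      using that not_less_Least unfolding q_def by blast
    have pos: "0 < Re (e \<tau> q)" if \<tau>: "\<tau> = t \<or> \<tau> = - t" for \<tau>
    proof -
      have e_\<tau>: "e \<tau> m' = (if \<tau> = t then e t m' else - e t m')" for m'
        using \<tau> unfolding e_def by auto
      have "0 < Re (fps_nth (E \<tau> (Suc q)) (Suc q + q))"
      proof (rule fps_nonneg_lowest_coeff_pos)
        show "fps_nonneg (E \<tau> (Suc q))" unfolding E_def by (rule nonneg)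
        show "fps_nth (E \<tau> (Suc q)) n = 0" if "n < Suc q + q" for n
          using that below_q[of "n - Suc q"] unfolding E_nth e_\<tau> by auto
        show "fps_nth (E \<tau> (Suc q)) (Suc q + q) \<noteq> 0"
          using eq unfolding E_nth e_\<tau> by auto
      qed
      then show ?thesis unfolding E_nth by simp
    qed
    have "e (- t) q = - e t q" unfolding e_def by simp
    then show False using pos[of t] pos[of "- t"] by simp
  qed
  show "c = 0"
  proof (rule fps_ext)
    fix m
    have "fps_nth c m + fps_nth c' m = 0" "\<i> * fps_nth c m - \<i> * fps_nth c' m = 0"
      using e_zero[of 1 m] e_zero[of \<i> m] unfolding e_def by simp_all
    then have "\<i> * (2 * fps_nth c m) = 0"
      by (simp add: eq_neg_iff_add_eq_0 add.commute right_diff_distrib algebra_simps)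
    then show "fps_nth c m = fps_nth 0 m" by simp
  qed
qed

locale star_functional = star_manifold A pb Mr + manifold_functional A \<omega>
  for A :: "('m::t2_space set \<times> ('m \<Rightarrow> real^'n)) set" and pb Mr \<omega>
begin

lemma gelfand_ideal_if_disjoint:
  assumes f: "f \<in> C0 A UNIV" and disjoint: "ssupp f \<inter> func_supp A \<omega> = {}"
  shows "f \<in> gelfand_ideal A Mr \<omega>"
proof -
  have ff: "star Mr (series_cnj f) f \<in> C0 A (ssupp f)"
    by (rule C0_star_left[OF smooth_series_cnj[OF C0_imp_smooth_series[OF f]] C0_ssupp[OF f]])
  have "\<omega> (star Mr (series_cnj f) f) = 0"
  proof (rule functional_eq_0_if_disjoint)
    show "star Mr (series_cnj f) f \<in> C0 A UNIV" using C0_mono[OF ff] by blast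
    show "tsupp (star Mr (series_cnj f) f r) \<inter> func_supp A \<omega> = {}" for r
      using C0_coeff_tsupp[OF ff, of r] disjoint by blast
  qed
  then show ?thesis unfolding gelfand_ideal_def using f by blast
qed

lemma vec_functional_supp_subset_ssupp:
  assumes f: "f \<in> C0 A UNIV"
  shows "func_supp A (vec_functional Mr \<omega> f) \<subseteq> ssupp f"
proof -
  have "vec_functional Mr \<omega> f g = 0" if g: "g \<in> C0 A (- ssupp f)" for g
  proof -
    have "star Mr (series_cnj f) g = (\<lambda>k x. 0)"
    proof (rule star_eq_0_if_disjoint)
      show "smooth_series A (series_cnj f)" by (rule smooth_series_cnj[OF C0_imp_smooth_series[OF f]])
      show "smooth_series A g" by (rule C0_imp_smooth_series[OF g])
      show "tsupp (series_cnj f i) \<inter> tsupp (g l) = {}" for i l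
        using C0_coeff_tsupp[OF C0_ssupp[OF f], of i] C0_coeff_tsupp[OF g, of l] tsupp_cnj[of "f i"]
        unfolding series_cnj_def by auto
    qed
    moreover have "star Mr (\<lambda>k x. 0) f = (\<lambda>k x. 0)"
      by (rule star_eq_0_if_disjoint)
         (auto simp: smooth_series_def smooth_fun_const tsupp_zero intro: C0_coeff_smooth[OF f])
    ultimately show ?thesis unfolding vec_functional_def by (simp add: functional_zero)
  qed
  moreover have "open (- ssupp f)" unfolding ssupp_def by (intro open_Compl closed_closure)
  ultimately show ?thesis using func_supp_subset_Compl by blast
qed

lemma vec_functional_supp_subset_func_supp:
  assumes f: "f \<in> C0 A UNIV"
  shows "func_supp A (vec_functional Mr \<omega> f) \<subseteq> func_supp A \<omega>"
proof (rule func_supp_subset_if_vanishing)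
  fix S assume vanish: "\<forall>g\<in>C0 A S. \<omega> g = 0"
  have "star Mr (star Mr (series_cnj f) g) f \<in> C0 A S" if "g \<in> C0 A S" for g
    using that f
    by (intro C0_star_right C0_star_left smooth_series_cnj C0_imp_smooth_series)
  then show "\<forall>g\<in>C0 A S. vec_functional Mr \<omega> f g = 0"
    unfolding vec_functional_def using vanish by blast
qed

lemma vec_functional_smult:
  assumes f: "f \<in> C0 A UNIV" and g: "g \<in> C0 A UNIV"
  shows "vec_functional Mr \<omega> (series_smult \<alpha> f) g = fps_cnj \<alpha> * (\<alpha> * vec_functional Mr \<omega> f g)"
proof -
  have sf: "smooth_series A f" and sg: "smooth_series A g" and cf: "smooth_series A (series_cnj f)"
    using f g by (simp_all add: C0_imp_smooth_series smooth_series_cnj)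
  have fgf: "star Mr (star Mr (series_cnj f) g) f \<in> C0 A UNIV"
    using f g by (intro C0_star_right C0_star_left cf C0_imp_smooth_series)
  have "star Mr (star Mr (series_cnj (series_smult \<alpha> f)) g) (series_smult \<alpha> f)
      = star Mr (series_smult (fps_cnj \<alpha>) (star Mr (series_cnj f) g)) (series_smult \<alpha> f)"
    by (simp only: series_cnj_smult star_smult_left[OF cf sg])
  also have "\<dots> = series_smult (fps_cnj \<alpha>) (series_smult \<alpha> (star Mr (star Mr (series_cnj f) g) f))"
    by (simp only: star_smult_left star_smult_right smooth_series_star[OF cf sg] smooth_series_smult[OF sf] sf)
  finally have "star Mr (star Mr (series_cnj (series_smult \<alpha> f)) g) (series_smult \<alpha> f)
      = series_smult (fps_cnj \<alpha>) (series_smult \<alpha> (star Mr (star Mr (series_cnj f) g) f))" .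
  then show ?thesis
    unfolding vec_functional_def using fgf by (simp add: functional_smult C0_smult)
qed

lemma vec_functional_supp_smult:
  assumes f: "f \<in> C0 A UNIV"
  shows "func_supp A (vec_functional Mr \<omega> (series_smult \<alpha> f)) \<subseteq> func_supp A (vec_functional Mr \<omega> f)"
proof (rule func_supp_subset_if_vanishing)
  fix S assume "\<forall>g\<in>C0 A S. vec_functional Mr \<omega> f g = 0"
  then show "\<forall>g\<in>C0 A S. vec_functional Mr \<omega> (series_smult \<alpha> f) g = 0"
    using vec_functional_smult[OF f] C0_mono by (metis mult_zero_right subset_UNIV)
qed

lemma functional_quadratic_expansion:
  assumes a: "a \<in> C0 A UNIV" and b: "b \<in> C0 A UNIV"
  shows "\<omega> (star Mr (series_cnj (series_add a (series_smult s b))) (series_add a (series_smult s b))) =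
    \<omega> (star Mr (series_cnj a) a) + s * \<omega> (star Mr (series_cnj a) b)
    + fps_cnj s * \<omega> (star Mr (series_cnj b) a) + fps_cnj s * (s * \<omega> (star Mr (series_cnj b) b))"
proof -
  let ?a = "series_cnj a" and ?b = "series_cnj b"
  let ?sb = "series_smult s b" and ?sb' = "series_smult (fps_cnj s) ?b"
  have sa: "smooth_series A a" "smooth_series A ?a" and sb: "smooth_series A b" "smooth_series A ?b"
    using a b by (simp_all add: C0_imp_smooth_series smooth_series_cnj)
  have ssb: "smooth_series A ?sb" "smooth_series A ?sb'" "smooth_series A (series_add a ?sb)"
    using sa sb by (simp_all add: smooth_series_smult smooth_series_add)
  have "star Mr (series_cnj (series_add a ?sb)) (series_add a ?sb) =
      series_add (star Mr ?a (series_add a ?sb)) (star Mr ?sb' (series_add a ?sb))"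
    by (simp only: series_cnj_add series_cnj_smult star_add_left[OF sa(2) ssb(2,3)])
  also have "\<dots> = series_add (series_add (star Mr ?a a) (star Mr ?a ?sb))
      (series_add (star Mr ?sb' a) (star Mr ?sb' ?sb))"
    by (simp only: star_add_right[OF sa(1) ssb(1) sa(2)] star_add_right[OF sa(1) ssb(1,2)])
  also have "\<dots> = series_add (series_add (star Mr ?a a) (series_smult s (star Mr ?a b)))
      (series_add (series_smult (fps_cnj s) (star Mr ?b a))
        (series_smult (fps_cnj s) (series_smult s (star Mr ?b b))))"
    by (simp only: star_smult_left star_smult_right sa sb ssb(1))
  finally have expansion: "star Mr (series_cnj (series_add a ?sb)) (series_add a ?sb) = \<dots>" .
  have "star Mr ?a a \<in> C0 A UNIV" "star Mr ?a b \<in> C0 A UNIV"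
    "star Mr ?b a \<in> C0 A UNIV" "star Mr ?b b \<in> C0 A UNIV"
    using a b sa sb by (simp_all add: C0_star_left)
  then show ?thesis
    unfolding expansion by (simp add: functional_add functional_smult C0_add C0_smult add.assoc)
qed

end

locale positive_star_functional = star_functional +
  assumes positive: "f \<in> C0 A UNIV \<Longrightarrow> fps_nonneg (\<omega> (star Mr (series_cnj f) f))"
begin

lemma functional_cnj_star_eq_0:
  assumes a: "a \<in> C0 A UNIV" and b: "b \<in> C0 A UNIV" and aa: "\<omega> (star Mr (series_cnj a) a) = 0"
  shows "\<omega> (star Mr (series_cnj a) b) = 0"
proof (rule fps_nonneg_perturbation_imp_zero)
  fix t p
  let ?s = "fps_const (t::complex) * fps_X ^ p"
  have "series_add a (series_smult ?s b) \<in> C0 A UNIV" using C0_add C0_smult a b by blast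
  from positive[OF this]
  show "fps_nonneg (fps_const t * fps_X ^ p * \<omega> (star Mr (series_cnj a) b) +
      fps_const (cnj t) * fps_X ^ p * \<omega> (star Mr (series_cnj b) a) +
      fps_const (cnj t) * fps_X ^ p * (fps_const t * fps_X ^ p * \<omega> (star Mr (series_cnj b) b)))"
    unfolding functional_quadratic_expansion[OF a b] aa fps_cnj_monom by simp
qed

text \<open>With \<open>a = h\<^sup>* * p\<close> one has \<open>\<omega> (a\<^sup>* * a) = \<omega>\<^sub>p (h * h\<^sup>*)\<close>, which vanishes when \<open>\<omega>\<^sub>p\<close>
  vanishes near the support of \<open>h\<close>.\<close>
lemma vec_functional_cross_eq_0:
  assumes p: "p \<in> C0 A UNIV" and q: "q \<in> C0 A UNIV" and h: "h \<in> C0 A S"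
    and vanish: "\<forall>g\<in>C0 A S. vec_functional Mr \<omega> p g = 0"
  shows "\<omega> (star Mr (star Mr (series_cnj p) h) q) = 0"
proof -
  have sp: "smooth_series A p" "smooth_series A (series_cnj p)" and sh: "smooth_series A h"
    "smooth_series A (series_cnj h)"
    using p h by (simp_all add: C0_imp_smooth_series smooth_series_cnj)
  define a where "a = star Mr (series_cnj h) p"
  have a_C0: "a \<in> C0 A UNIV" unfolding a_def by (rule C0_star_left[OF sh(2) p])
  have cnj_a: "series_cnj a = star Mr (series_cnj p) h"
    unfolding a_def by (simp add: series_cnj_star sh sp)
  have "star Mr (series_cnj a) a = star Mr (star Mr (series_cnj p) h) (star Mr (series_cnj h) p)"
    unfolding cnj_a by (simp add: a_def)
  also have "\<dots> = star Mr (star Mr (star Mr (series_cnj p) h) (series_cnj h)) p"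
    by (rule star_assoc[symmetric, OF smooth_series_star[OF sp(2) sh(1)] sh(2) sp(1)])
  also have "\<dots> = star Mr (star Mr (series_cnj p) (star Mr h (series_cnj h))) p"
    by (simp only: star_assoc[OF sp(2) sh])
  finally have "star Mr (series_cnj a) a = star Mr (star Mr (series_cnj p) (star Mr h (series_cnj h))) p" .
  then have "\<omega> (star Mr (series_cnj a) a) = vec_functional Mr \<omega> p (star Mr h (series_cnj h))"
    unfolding vec_functional_def by simp
  also have "\<dots> = 0" using vanish C0_star_right[OF h sh(2)] by blast
  finally have "\<omega> (star Mr (series_cnj a) q) = 0"
    by (rule functional_cnj_star_eq_0[OF a_C0 q])
  then show ?thesis unfolding cnj_a .
qed

lemma vec_functional_supp_add:
  assumes f: "f \<in> C0 A UNIV" and g: "g \<in> C0 A UNIV"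
  shows "func_supp A (vec_functional Mr \<omega> (series_add f g))
     \<subseteq> func_supp A (vec_functional Mr \<omega> f) \<union> func_supp A (vec_functional Mr \<omega> g)"
proof (rule func_supp_subset_Un_if_vanishing)
  fix S
  assume vf: "\<forall>h\<in>C0 A S. vec_functional Mr \<omega> f h = 0" and vg: "\<forall>h\<in>C0 A S. vec_functional Mr \<omega> g h = 0"
  show "\<forall>h\<in>C0 A S. vec_functional Mr \<omega> (series_add f g) h = 0"
  proof
    fix h assume h: "h \<in> C0 A S"
    have s: "smooth_series A f" "smooth_series A g" "smooth_series A h"
      "smooth_series A (series_cnj f)" "smooth_series A (series_cnj g)"
      using f g h by (simp_all add: C0_imp_smooth_series smooth_series_cnj)
    let ?X = "star Mr (series_cnj f) h" and ?Y = "star Mr (series_cnj g) h"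
    have C0: "star Mr ?X f \<in> C0 A UNIV" "star Mr ?X g \<in> C0 A UNIV"
      "star Mr ?Y f \<in> C0 A UNIV" "star Mr ?Y g \<in> C0 A UNIV"
      using f g s by (simp_all add: C0_star_left smooth_series_star)
    have "star Mr (star Mr (series_cnj (series_add f g)) h) (series_add f g)
        = series_add (series_add (star Mr ?X f) (star Mr ?Y f)) (series_add (star Mr ?X g) (star Mr ?Y g))"
      using s by (simp add: series_cnj_add star_add_left star_add_right smooth_series_star smooth_series_add)
    then have "vec_functional Mr \<omega> (series_add f g) h =
        \<omega> (star Mr ?X f) + \<omega> (star Mr ?Y f) + (\<omega> (star Mr ?X g) + \<omega> (star Mr ?Y g))"
      unfolding vec_functional_def using C0 by (simp add: functional_add C0_add)
    moreover have "\<omega> (star Mr ?X f) = 0" "\<omega> (star Mr ?Y g) = 0"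
      using vf vg h unfolding vec_functional_def by blast+
    moreover have "\<omega> (star Mr ?X g) = 0" "\<omega> (star Mr ?Y f) = 0"
      using vec_functional_cross_eq_0[OF f g h vf] vec_functional_cross_eq_0[OF g f h vg] by blast+
    ultimately show "vec_functional Mr \<omega> (series_add f g) h = 0" by simp
  qed
qed

end

theorem lemma2:
  fixes A :: "('m::{t2_space, second_countable_topology} set \<times> ('m \<Rightarrow> real^'n)) set"
    and pb :: "('m \<Rightarrow> complex) \<Rightarrow> ('m \<Rightarrow> complex) \<Rightarrow> ('m \<Rightarrow> complex)"
    and Mr :: "nat \<Rightarrow> ('m \<Rightarrow> complex) \<Rightarrow> ('m \<Rightarrow> complex) \<Rightarrow> ('m \<Rightarrow> complex)"
    and \<omega> :: "'m fseries \<Rightarrow> complex fps"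
    and f g :: "'m fseries" and \<alpha> :: "complex fps"
  assumes "smooth_atlas A"
    and "poisson_bracket A pb"
    and "star_product A pb Mr"
    and "positive_functional A Mr \<omega>"
    and "f \<in> C0 A UNIV" and "g \<in> C0 A UNIV"
  shows "(ssupp f \<inter> func_supp A \<omega> = {} \<longrightarrow> f \<in> gelfand_ideal A Mr \<omega>)
     \<and> func_supp A (vec_functional Mr \<omega> f) \<subseteq> ssupp f \<inter> func_supp A \<omega>
     \<and> func_supp A (vec_functional Mr \<omega> (series_add f g))
         \<subseteq> func_supp A (vec_functional Mr \<omega> f) \<union> func_supp A (vec_functional Mr \<omega> g)
     \<and> func_supp A (vec_functional Mr \<omega> (series_smult \<alpha> f))
         \<subseteq> func_supp A (vec_functional Mr \<omega> f)"
proof -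
  interpret positive_star_functional A pb Mr \<omega>
    using assms(1,3,4) unfolding positive_functional_def
    by unfold_locales blast+
  show ?thesis
    using gelfand_ideal_if_disjoint[OF assms(5)] vec_functional_supp_subset_ssupp[OF assms(5)]
      vec_functional_supp_subset_func_supp[OF assms(5)] vec_functional_supp_add[OF assms(5,6)]
      vec_functional_supp_smult[OF assms(5)]
    by blast
qed

end
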